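(* Let $G(\lambda)\in\mathbb F(\lambda)^{p\times m}$, let $L(\lambda)$ be a strong block minimal bases linearization of $G(\lambda)$ as in the context, with transfer function matrix $\widehat G(\lambda)=\begin{bmatrix} M(\lambda)+\widehat K_2^TC(\lambda I_n-A)^{-1}B\widehat K_1 & K_2(\lambda)^T\\ K_1(\lambda) & 0\end{bmatrix}$. (a) If $h(\lambda)\in\mathcal N_r(G(\lambda))$ then $z(\lambda)=\begin{bmatrix}N_1(\lambda)^T\\ -\widehat N_2(\lambda)M(\lambda)N_1(\lambda)^T\end{bmatrix}h(\lambda)\in\mathcal N_r(\widehat G(\lambda))$. Moreover, if $h(\lambda)\ne0$ is a vector polynomial, then $z(\lambda)$ is a vector polynomial and $\deg z(\lambda)=\deg(N_1(\lambda)^Th(\lambda))=\deg N_1(\lambda)+\deg h(\lambda)$. (b) If $\{h_1(\lambda),\dots,h_l(\lambda)\}$ is a right minimal basis of $G(\lambda)$, then $\left\{\begin{bmatrix}N_1(\lambda)^T\\ -\widehat N_2(\lambda)M(\lambda)N_1(\lambda)^T\end{bmatrix}h_j(\lambda)\right\}_{j=1}^l$ is a right minimal basis of $\widehat G(\lambda)$.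
   Context: $\mathbb F$ is an arbitrary field. A polynomial matrix $K\in\mathbb F[\lambda]^{a\times b}$, $a<b$, is a minimal basis if its rows form a minimal basis (polynomial basis of least total degree) of the subspace of $\mathbb F(\lambda)^b$ they span; $K\in\mathbb F[\lambda]^{a_1\times b}$, $N\in\mathbb F[\lambda]^{a_2\times b}$ are dual minimal bases if both are minimal bases, $a_1+a_2=b$ and $KN^T=0$. Strong block minimal bases linearization: write $G=D+C(\lambda I_n-A)^{-1}B$ with $D$ the polynomial part, $\deg D>1$, and $C(\lambda I_n-A)^{-1}B$ a minimal order state-space realization of the strictly proper part ($n$ minimal). Let $K_1\in\mathbb F[\lambda]^{\widehat m\times(m+\widehat m)}$, $K_2\in\mathbb F[\lambda]^{\widehat p\times(p+\widehat p)}$ be minimal bases with all row degrees $1$, $N_1\in\mathbb F[\lambda]^{m\times(m+\widehat m)}$, $N_2\in\mathbb F[\lambda]^{p\times(p+\widehat p)}$ minimal bases dual to $K_1,K_2$ respectively, each with all its row degrees equal, and $M(\lambda)\in\mathbb F[\lambda]^{(p+\widehat p)\times(m+\widehat m)}$ a pencil with $D=N_2MN_1^T$ and $\deg D=\deg N_1+\deg N_2+1$. Let $\widehat K_1\in\mathbb F^{m\times(m+\widehat m)}$, $\widehat K_2\in\mathbb F^{p\times(p+\widehat p)}$, $\widehat N_1\in\mathbb F[\lambda]^{\widehat m\times(m+\widehat m)}$, $\widehat N_2\in\mathbb F[\lambda]^{\widehat p\times(p+\widehat p)}$ be such that $U_i=\begin{bmatrix}K_i\\ \widehat K_i\end{bmatrix}$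 is unimodular with $U_i^{-1}=\begin{bmatrix}\widehat N_i^T & N_i^T\end{bmatrix}$, $i=1,2$. For nonsingular $T,S\in\mathbb F^{n\times n}$, $L(\lambda)=\begin{bmatrix}T(\lambda I_n-A)S & TB\widehat K_1 & 0\\ -\widehat K_2^TCS & M(\lambda) & K_2(\lambda)^T\\ 0 & K_1(\lambda) & 0\end{bmatrix}$. A right minimal basis of a rational matrix $G$ is a polynomial matrix (or set of vectors) whose columns form a minimal basis of $\mathcal N_r(G)=\{x:Gx=0\}$. *)

theory Defs
  imports "HOL-Computational_Algebra.Polynomial" "HOL-Computational_Algebra.Fraction_Field" "Jordan_Normal_Form.Gauss_Jordan_Elimination"
begin

text \<open>Rational functions over the field 'a are the type ('a poly) fract.
  Polynomial matrices are 'a poly mat, rational matrices are ('a poly fract) mat,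
  constant matrices are 'a mat.\<close>

type_synonym 'a rat_fun = "'a poly fract"

definition embp :: "'a::field poly mat \<Rightarrow> 'a rat_fun mat" where
  "embp P = map_mat (\<lambda>x. Fract x 1) P"

definition embpv :: "'a::field poly vec \<Rightarrow> 'a rat_fun vec" where
  "embpv v = map_vec (\<lambda>x. Fract x 1) v"

definition constp :: "'a::field mat \<Rightarrow> 'a poly mat" where
  "constp A = map_mat (\<lambda>c. [:c:]) A"

definition embc :: "'a::field mat \<Rightarrow> 'a rat_fun mat" where
  "embc A = embp (constp A)"

definition mat_deg :: "'a::zero poly mat \<Rightarrow> nat" where
  "mat_deg P = Max (insert 0 {degree (P $$ (i,j)) | i j. i < dim_row P \<and> j < dim_col P})"

definition vec_deg :: "'a::zero poly vec \<Rightarrow> nat" where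
  "vec_deg v = Max (insert 0 {degree (v $ i) | i. i < dim_vec v})"

definition row_deg :: "'a::zero poly mat \<Rightarrow> nat \<Rightarrow> nat" where
  "row_deg P i = vec_deg (row P i)"

definition col_deg :: "'a::zero poly mat \<Rightarrow> nat \<Rightarrow> nat" where
  "col_deg P j = vec_deg (col P j)"

definition poly_col_basis :: "nat \<Rightarrow> 'a::field poly mat \<Rightarrow> 'a rat_fun vec set \<Rightarrow> bool" where
  "poly_col_basis d H V \<longleftrightarrow> dim_row H = d \<and>
     (\<forall>c \<in> carrier_vec (dim_col H). embp H *\<^sub>v c = 0\<^sub>v d \<longrightarrow> c = 0\<^sub>v (dim_col H)) \<and>
     V = {embp H *\<^sub>v c | c. c \<in> carrier_vec (dim_col H)}"

definition minimal_col_basis :: "nat \<Rightarrow> 'a::field poly mat \<Rightarrow> 'a rat_fun vec set \<Rightarrow> bool" where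
  "minimal_col_basis d H V \<longleftrightarrow> poly_col_basis d H V \<and>
     (\<forall>H'. poly_col_basis d H' V \<longrightarrow> (\<Sum>j<dim_col H. col_deg H j) \<le> (\<Sum>j<dim_col H'. col_deg H' j))"

definition minimal_basis :: "'a::field poly mat \<Rightarrow> bool" where
  "minimal_basis K \<longleftrightarrow> minimal_col_basis (dim_col K) (transpose_mat K)
      {embp (transpose_mat K) *\<^sub>v c | c. c \<in> carrier_vec (dim_row K)}"

definition dual_minimal_bases :: "'a::field poly mat \<Rightarrow> 'a poly mat \<Rightarrow> bool" where
  "dual_minimal_bases K N \<longleftrightarrow> minimal_basis K \<and> minimal_basis N \<and>
     dim_col K = dim_col N \<and> dim_row K + dim_row N = dim_col K \<and>
     K * transpose_mat N = 0\<^sub>m (dim_row K) (dim_row N)"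

definition rnull :: "'a::field rat_fun mat \<Rightarrow> 'a rat_fun vec set" where
  "rnull G = {x \<in> carrier_vec (dim_col G). G *\<^sub>v x = 0\<^sub>v (dim_row G)}"

definition right_minimal_basis :: "'a::field poly mat \<Rightarrow> 'a rat_fun mat \<Rightarrow> bool" where
  "right_minimal_basis H G \<longleftrightarrow> minimal_col_basis (dim_col G) H (rnull G)"

definition lamI_minus :: "'a::field mat \<Rightarrow> 'a rat_fun mat" where
  "lamI_minus A = embp (mat (dim_row A) (dim_row A)
       (\<lambda>(i,j). [:- (A $$ (i,j)), (if i = j then 1 else 0):]))"

definition resolvent :: "'a::field mat \<Rightarrow> 'a rat_fun mat" where
  "resolvent A = the (mat_inverse (lamI_minus A))"

definition state_space :: "'a::field mat \<Rightarrow> 'a mat \<Rightarrow> 'a mat \<Rightarrow> 'a rat_fun mat" where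
  "state_space A B C = embc C * resolvent A * embc B"

definition minimal_realization :: "nat \<Rightarrow> nat \<Rightarrow> nat \<Rightarrow> 'a::field mat \<Rightarrow> 'a mat \<Rightarrow> 'a mat \<Rightarrow> bool" where
  "minimal_realization n p m A B C \<longleftrightarrow>
     A \<in> carrier_mat n n \<and> B \<in> carrier_mat n m \<and> C \<in> carrier_mat p n \<and>
     (\<forall>n' A' B' C'. A' \<in> carrier_mat n' n' \<and> B' \<in> carrier_mat n' m \<and> C' \<in> carrier_mat p n' \<and>
        state_space A' B' C' = state_space A B C \<longrightarrow> n \<le> n')"

definition unimodular_with_inverse :: "'a::field poly mat \<Rightarrow> 'a poly mat \<Rightarrow> bool" where
  "unimodular_with_inverse U V \<longleftrightarrow> (\<exists>k. U \<in> carrier_mat k k \<and> V \<in> carrier_mat k k \<and>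
     U * V = 1\<^sub>m k \<and> V * U = 1\<^sub>m k)"

end

theory Submission
  imports Defs "Jordan_Normal_Form.Char_Poly"
begin

text \<open>Write x = N1^T h and w = Nh2 M x, so that Z h = [x; -w]. The unimodular completions give the
  block identities that make h \<mapsto> Z h a bijection between the right null spaces of G and
  Ghat, with constant left inverse [Kh1 0]. For the degrees, the minimal basis N1 with equal row
  degrees d has a leading coefficient matrix of full row rank, hence the predictable degree
  property deg (N1^T h) = d + deg h. The vector M x = K2^T w + Kh2^T (D h) then bounds w: the strict
  properness of C (lambda I - A)^{-1} B gives deg (D h) \<le> deg h, the pencil gives
  deg (M x) \<le> deg x + 1, and predictable degree for K2 (row degrees 1) turns this into
  deg w \<le> deg x. So deg (Z h) = d + deg h for every nonzero polynomial null vector, and a basis of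
  least total degree is mapped to one, because the left inverse maps any polynomial basis of the
  null space of Ghat back to a polynomial basis of the null space of G.\<close>

lemma mult_unit_vec:
  fixes A :: "'a::semiring_1 mat"
  assumes A: "A \<in> carrier_mat n k" and j: "j < k"
  shows "A *\<^sub>v unit_vec k j = col A j"
proof (rule eq_vecI)
  fix i assume "i < dim_vec (col A j)"
  then have "row A i \<in> carrier_vec k" "i < n" using A by auto
  then show "(A *\<^sub>v unit_vec k j) $ i = col A j $ i"
    using A j scalar_prod_right_unit[of j k "row A i"] by simp
qed (use A in simp)

lemma mult_mat_vec_uminus:
  "A \<in> carrier_mat n k \<Longrightarrow> v \<in> carrier_vec k \<Longrightarrow> A *\<^sub>v (- v) = - (A *\<^sub>v (v :: 'b::comm_ring_1 vec))"
  by (intro eq_vecI) (auto simp: scalar_prod_def sum_negf)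

lemma mult_mat_vec_assoc3:
  fixes A :: "'b::comm_ring_1 mat"
  assumes "A \<in> carrier_mat n1 n2" "B \<in> carrier_mat n2 n3" "C \<in> carrier_mat n3 n4" "v \<in> carrier_vec n4"
  shows "(A * B * C) *\<^sub>v v = A *\<^sub>v (B *\<^sub>v (C *\<^sub>v v))"
proof -
  have "(A * B * C) *\<^sub>v v = (A * B) *\<^sub>v (C *\<^sub>v v)" by (rule assoc_mult_mat_vec) (use assms in auto)
  also have "\<dots> = A *\<^sub>v (B *\<^sub>v (C *\<^sub>v v))" by (rule assoc_mult_mat_vec) (use assms in auto)
  finally show ?thesis .
qed

lemma mult_mat_vec_zero: "A \<in> carrier_mat n k \<Longrightarrow> A *\<^sub>v 0\<^sub>v k = (0\<^sub>v n :: 'b::comm_ring_1 vec)"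
  by (intro eq_vecI) auto

lemma zero_mat_mult_vec: "v \<in> carrier_vec k \<Longrightarrow> 0\<^sub>m n k *\<^sub>v v = (0\<^sub>v n :: 'b::comm_ring_1 vec)"
  by (intro eq_vecI) auto

lemma zero_vec_append: "0\<^sub>v (n + k) = (0\<^sub>v n @\<^sub>v 0\<^sub>v k :: 'b::zero vec)"
  by (intro eq_vecI) auto

lemma smult_mat_mult_mat_vec:
  "A \<in> carrier_mat n k \<Longrightarrow> v \<in> carrier_vec k \<Longrightarrow> (c \<cdot>\<^sub>m A) *\<^sub>v v = (c :: 'a::comm_ring) \<cdot>\<^sub>v (A *\<^sub>v v)"
  by (intro eq_vecI) (auto simp: scalar_prod_def sum_distrib_left mult.assoc)

lemma mult_transpose_swap:
  fixes A B :: "'b::comm_ring_1 mat"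
  shows "A \<in> carrier_mat n k \<Longrightarrow> B \<in> carrier_mat n' k \<Longrightarrow> B * transpose_mat A = transpose_mat (A * transpose_mat B)"
  by (simp add: transpose_mult[of A n k "transpose_mat B" n'])

lemma dim_append_rows[simp]:
  "dim_row (A @\<^sub>r B) = dim_row A + dim_row B" "dim_col (A @\<^sub>r B) = dim_col A"
  unfolding append_rows_def by simp_all

lemma four_block_mat_inject:
  assumes "A \<in> carrier_mat ra ca" "A' \<in> carrier_mat ra ca" "B \<in> carrier_mat ra cb" "B' \<in> carrier_mat ra cb"
    "C \<in> carrier_mat rb ca" "C' \<in> carrier_mat rb ca" "D \<in> carrier_mat rb cb" "D' \<in> carrier_mat rb cb"
    and eq: "four_block_mat A B C D = four_block_mat A' B' C' D'"
  shows "A = A'" "B = B'" "C = C'" "D = D'"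
proof -
  have entry: "four_block_mat A B C D $$ (i, j) = four_block_mat A' B' C' D' $$ (i, j)" for i j
    using eq by simp
  show "A = A'"
  proof (rule eq_matI)
    fix i j assume "i < dim_row A'" "j < dim_col A'"
    then show "A $$ (i, j) = A' $$ (i, j)" using entry[of i j] assms(1-8) by auto
  qed (use assms in auto)
  show "B = B'"
  proof (rule eq_matI)
    fix i j assume "i < dim_row B'" "j < dim_col B'"
    then show "B $$ (i, j) = B' $$ (i, j)" using entry[of i "ca + j"] assms(1-8) by auto
  qed (use assms in auto)
  show "C = C'"
  proof (rule eq_matI)
    fix i j assume "i < dim_row C'" "j < dim_col C'"
    then show "C $$ (i, j) = C' $$ (i, j)" using entry[of "ra + i" j] assms(1-8) by auto
  qed (use assms in auto)
  show "D = D'"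
  proof (rule eq_matI)
    fix i j assume "i < dim_row D'" "j < dim_col D'"
    then show "D $$ (i, j) = D' $$ (i, j)" using entry[of "ra + i" "ca + j"] assms(1-8) by auto
  qed (use assms in auto)
qed

lemma append_rows_mult_transpose:
  fixes K Kh Nh N :: "'b::comm_ring_1 mat"
  assumes "K \<in> carrier_mat r c" "Kh \<in> carrier_mat s c" "Nh \<in> carrier_mat r' c" "N \<in> carrier_mat s' c"
  shows "(K @\<^sub>r Kh) * transpose_mat (Nh @\<^sub>r N) = four_block_mat (K * transpose_mat Nh) (K * transpose_mat N)
           (Kh * transpose_mat Nh) (Kh * transpose_mat N)"
  using assms unfolding append_rows_def
  by (subst transpose_four_block_mat, auto, subst mult_four_block_mat, auto)

lemma transpose_append_rows_mult:
  fixes K Kh Nh N :: "'b::comm_ring_1 mat"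
  assumes "K \<in> carrier_mat r c" "Kh \<in> carrier_mat s c" "Nh \<in> carrier_mat r c" "N \<in> carrier_mat s c"
  shows "transpose_mat (Nh @\<^sub>r N) * (K @\<^sub>r Kh) = transpose_mat Nh * K + transpose_mat N * Kh"
proof (rule eq_matI)
  fix i j
  assume "i < dim_row (transpose_mat Nh * K + transpose_mat N * Kh)"
    "j < dim_col (transpose_mat Nh * K + transpose_mat N * Kh)"
  then have ij: "i < c" "j < c" using assms by auto
  have "col (Nh @\<^sub>r N) i = col Nh i @\<^sub>v col N i" "col (K @\<^sub>r Kh) j = col K j @\<^sub>v col Kh j"
    unfolding append_rows_def by (rule col_four_block_mat(1); use assms ij in auto)+
  moreover have "(transpose_mat (Nh @\<^sub>r N) * (K @\<^sub>r Kh)) $$ (i, j) = col (Nh @\<^sub>r N) i \<bullet> col (K @\<^sub>r Kh) j"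
    using ij assms by simp
  ultimately show "(transpose_mat (Nh @\<^sub>r N) * (K @\<^sub>r Kh)) $$ (i, j)
      = (transpose_mat Nh * K + transpose_mat N * Kh) $$ (i, j)"
    using assms ij by (simp add: scalar_prod_append[of _ r _ s])
qed (use assms in auto)

lemma inverse_append_rows_blocks:
  fixes K Kh Nh N :: "'b::comm_ring_1 mat"
  assumes K: "K \<in> carrier_mat r c" and Kh: "Kh \<in> carrier_mat s c"
    and Nh: "Nh \<in> carrier_mat r c" and N: "N \<in> carrier_mat s c"
    and UV: "(K @\<^sub>r Kh) * transpose_mat (Nh @\<^sub>r N) = 1\<^sub>m (r + s)"
    and VU: "transpose_mat (Nh @\<^sub>r N) * (K @\<^sub>r Kh) = 1\<^sub>m c"
  shows "K * transpose_mat Nh = 1\<^sub>m r" "K * transpose_mat N = 0\<^sub>m r s"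
    "Kh * transpose_mat Nh = 0\<^sub>m s r" "Kh * transpose_mat N = 1\<^sub>m s"
    and "transpose_mat Nh * K + transpose_mat N * Kh = 1\<^sub>m c"
proof -
  have "four_block_mat (K * transpose_mat Nh) (K * transpose_mat N) (Kh * transpose_mat Nh) (Kh * transpose_mat N)
      = four_block_mat (1\<^sub>m r) (0\<^sub>m r s) (0\<^sub>m s r) (1\<^sub>m s)"
    using UV append_rows_mult_transpose[OF K Kh Nh N] by simp
  note blocks = four_block_mat_inject[where ra = r and ca = r and rb = s and cb = s, OF _ _ _ _ _ _ _ _ this]
  show "K * transpose_mat Nh = 1\<^sub>m r" "K * transpose_mat N = 0\<^sub>m r s"
    "Kh * transpose_mat Nh = 0\<^sub>m s r" "Kh * transpose_mat N = 1\<^sub>m s"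
    using K Kh Nh N by (auto intro!: blocks)
  show "transpose_mat Nh * K + transpose_mat N * Kh = 1\<^sub>m c"
    using VU transpose_append_rows_mult[OF K Kh Nh N] by simp
qed

lemma append_rows_left_inverse:
  fixes L X Y :: "'b::comm_ring_1 mat"
  assumes L: "L \<in> carrier_mat k a" and X: "X \<in> carrier_mat a k" and Y: "Y \<in> carrier_mat b k"
    and LX: "L * X = 1\<^sub>m k"
  shows "four_block_mat L (0\<^sub>m k b) (0\<^sub>m 0 a) (0\<^sub>m 0 b) * (X @\<^sub>r Y) = 1\<^sub>m k"
proof -
  have "four_block_mat L (0\<^sub>m k b) (0\<^sub>m 0 a) (0\<^sub>m 0 b) * (X @\<^sub>r Y)
      = four_block_mat (L * X + 0\<^sub>m k b * Y) (L * 0\<^sub>m a 0 + 0\<^sub>m k b * 0\<^sub>m b 0)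
          (0\<^sub>m 0 a * X + 0\<^sub>m 0 b * Y) (0\<^sub>m 0 a * 0\<^sub>m a 0 + 0\<^sub>m 0 b * 0\<^sub>m b 0)"
    unfolding append_rows_def using L X Y by (subst mult_four_block_mat) auto
  also have "\<dots> = 1\<^sub>m k"
    using L X Y LX by (intro eq_matI) auto
  finally show ?thesis .
qed

lemma mat_inverse_eq_Some:
  fixes P :: "'a::field mat"
  assumes P: "P \<in> carrier_mat n n" and Q: "Q \<in> carrier_mat n n"
    and PQ: "P * Q = 1\<^sub>m n" and QP: "Q * P = 1\<^sub>m n"
  shows "mat_inverse P = Some Q"
proof -
  have "P \<in> Units (ring_mat TYPE('a) n ())"
    unfolding Units_def ring_mat_def using P Q PQ QP by auto
  then have "mat_inverse P \<noteq> None" using mat_inverse(1)[OF P, of "()"] by blast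
  then obtain R where R: "mat_inverse P = Some R" by blast
  then have R_carrier: "R \<in> carrier_mat n n" and RP: "R * P = 1\<^sub>m n"
    using mat_inverse(2)[OF P R] by auto
  have "R = R * (P * Q)" using R_carrier PQ by simp
  also have "\<dots> = (R * P) * Q" using R_carrier P Q by (simp add: assoc_mult_mat[of R n n P n Q n])
  also have "\<dots> = Q" using RP Q by simp
  finally show ?thesis using R by simp
qed

lemma wide_mat_kernel_nonzero:
  fixes X :: "'b::field mat"
  assumes X: "X \<in> carrier_mat l2 l1" and lt: "l2 < l1"
  shows "\<exists>v \<in> carrier_vec l1. v \<noteq> 0\<^sub>v l1 \<and> X *\<^sub>v v = 0\<^sub>v l2"
proof -
  define X0 where "X0 = X @\<^sub>r 0\<^sub>m (l1 - l2) l1"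
  have X0: "X0 \<in> carrier_mat l1 l1"
    unfolding X0_def using carrier_append_rows[OF X, of "0\<^sub>m (l1 - l2) l1" "l1 - l2"] lt by simp
  have "X0 = mat\<^sub>r l1 l1 (\<lambda>i. if i = l1 - 1 then 0\<^sub>v l1 else row X0 i)"
  proof (rule eq_matI)
    fix i j assume "i < dim_row (mat\<^sub>r l1 l1 (\<lambda>i. if i = l1 - 1 then 0\<^sub>v l1 else row X0 i))"
      "j < dim_col (mat\<^sub>r l1 l1 (\<lambda>i. if i = l1 - 1 then 0\<^sub>v l1 else row X0 i))"
    then have ij: "i < l1" "j < l1" by auto
    show "X0 $$ (i, j) = mat\<^sub>r l1 l1 (\<lambda>i. if i = l1 - 1 then 0\<^sub>v l1 else row X0 i) $$ (i, j)"
      using ij X X0 lt unfolding X0_def by (auto simp: append_rows_def)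
  qed (use X0 in auto)
  also have "det \<dots> = 0" by (rule det_row_0) (use lt X0 in auto)
  finally obtain v where v: "v \<in> carrier_vec l1" "v \<noteq> 0\<^sub>v l1" "X0 *\<^sub>v v = 0\<^sub>v l1"
    using det_0_iff_vec_prod_zero_field[OF X0] by blast
  have "(X *\<^sub>v v) @\<^sub>v (0\<^sub>m (l1 - l2) l1 *\<^sub>v v) = 0\<^sub>v l2 @\<^sub>v 0\<^sub>v (l1 - l2)"
    using v(3) mat_mult_append[OF X _ v(1), of "0\<^sub>m (l1 - l2) l1" "l1 - l2"] zero_vec_append[of l2 "l1 - l2"] lt
    unfolding X0_def by simp
  then have "X *\<^sub>v v = 0\<^sub>v l2"
    using append_vec_eq[of "X *\<^sub>v v" l2 "0\<^sub>v l2"] X v by auto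
  with v show ?thesis by blast
qed

lemma col_span_factorization:
  fixes A B :: "'b::comm_ring_1 mat"
  assumes A: "A \<in> carrier_mat d l1" and B: "B \<in> carrier_mat d l2"
    and span: "\<And>j. j < l1 \<Longrightarrow> \<exists>c. c \<in> carrier_vec l2 \<and> col A j = B *\<^sub>v c"
  shows "\<exists>X \<in> carrier_mat l2 l1. B * X = A"
proof -
  define f where "f j = (SOME c. c \<in> carrier_vec l2 \<and> col A j = B *\<^sub>v c)" for j
  have f: "f j \<in> carrier_vec l2 \<and> col A j = B *\<^sub>v f j" if "j < l1" for j
    unfolding f_def by (rule someI_ex[OF span[OF that]])
  define X where "X = mat l2 l1 (\<lambda>(i, j). f j $ i)"
  have X: "X \<in> carrier_mat l2 l1" unfolding X_def by simp
  have col_X: "col X j = f j" if j: "j < l1" for j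
  proof -
    have "f j \<in> carrier_vec l2" using f[OF j] by simp
    then show ?thesis unfolding X_def using j by (intro eq_vecI) auto
  qed
  have "B * X = A"
  proof (rule eq_matI)
    fix i j assume i: "i < dim_row A" and j: "j < dim_col A"
    have "(B * X) $$ (i, j) = col (B * X) j $ i" using B X A i j by simp
    also have "\<dots> = col A j $ i" using col_mult2[OF B X, of j] col_X f A j by simp
    finally show "(B * X) $$ (i, j) = A $$ (i, j)" using A i j by simp
  qed (use A B X in simp_all)
  with X show ?thesis by blast
qed

section \<open>Embedding polynomial matrices into rational matrices\<close>

interpretation fract_hom: inj_comm_ring_hom "\<lambda>x::'a::idom. Fract x 1"
  by unfold_locales (auto simp: One_fract_def Zero_fract_def eq_fract)

interpretation const_poly_hom: inj_comm_ring_hom "\<lambda>x::'a::comm_ring_1. [:x:]"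
  by unfold_locales (auto simp: one_pCons)

definition constpv :: "'a::field vec \<Rightarrow> 'a poly vec" where
  "constpv v = map_vec (\<lambda>c. [:c:]) v"

lemma embp_carrier[simp]: "embp P \<in> carrier_mat n k \<longleftrightarrow> P \<in> carrier_mat n k"
  and embp_dims[simp]: "dim_row (embp P) = dim_row P" "dim_col (embp P) = dim_col P"
  and embpv_carrier[simp]: "embpv v \<in> carrier_vec n \<longleftrightarrow> v \<in> carrier_vec n"
  and embpv_dim[simp]: "dim_vec (embpv v) = dim_vec v"
  and constp_carrier[simp]: "constp A \<in> carrier_mat n k \<longleftrightarrow> A \<in> carrier_mat n k"
  and constp_dims[simp]: "dim_row (constp A) = dim_row A" "dim_col (constp A) = dim_col A"
  and constpv_carrier[simp]: "constpv w \<in> carrier_vec n \<longleftrightarrow> w \<in> carrier_vec n"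
  and embc_carrier[simp]: "embc A \<in> carrier_mat n k \<longleftrightarrow> A \<in> carrier_mat n k"
  and embc_dims[simp]: "dim_row (embc A) = dim_row A" "dim_col (embc A) = dim_col A"
  unfolding embp_def embpv_def constp_def constpv_def embc_def carrier_mat_def carrier_vec_def by auto

lemma embp_mult:
  "P \<in> carrier_mat n k \<Longrightarrow> Q \<in> carrier_mat k l \<Longrightarrow> embp (P * Q) = embp P * embp (Q :: 'a::field poly mat)"
  unfolding embp_def by (rule fract_hom.mat_hom_mult)

lemma embp_mult_vec:
  "P \<in> carrier_mat n k \<Longrightarrow> v \<in> carrier_vec k \<Longrightarrow> embpv (P *\<^sub>v v) = embp P *\<^sub>v embpv (v :: 'a::field poly vec)"
  unfolding embp_def embpv_def by (rule fract_hom.mult_mat_vec_hom)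

lemma embp_triple_mult:
  assumes "P \<in> carrier_mat n1 n2" "Q \<in> carrier_mat n2 n3" "R \<in> carrier_mat n3 n4"
  shows "embp (P * Q * R) = embp P * embp Q * embp (R :: 'a::field poly mat)"
  using embp_mult[of "P * Q" n1 n3 R n4] embp_mult[of P n1 n2 Q n3] assms by simp

lemma embp_uminus: "embp (- P) = - embp (P :: 'a::field poly mat)"
  unfolding embp_def by (intro eq_matI) auto

lemma embp_transpose[simp]: "embp (transpose_mat P) = transpose_mat (embp (P :: 'a::field poly mat))"
  unfolding embp_def by (intro eq_matI) auto

lemma embc_transpose[simp]: "embc (transpose_mat A) = transpose_mat (embc (A :: 'a::field mat))"
  unfolding embc_def embp_def constp_def by (intro eq_matI) auto

lemma constp_transpose: "constp (transpose_mat A) = transpose_mat (constp A)"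
  unfolding constp_def by (intro eq_matI) auto

lemma embp_one[simp]: "embp (1\<^sub>m n :: 'a::field poly mat) = 1\<^sub>m n"
  unfolding embp_def by (intro eq_matI) auto

lemma embp_append_rows:
  "P \<in> carrier_mat n1 k \<Longrightarrow> Q \<in> carrier_mat n2 k \<Longrightarrow> embp (P @\<^sub>r Q) = embp P @\<^sub>r embp (Q :: 'a::field poly mat)"
  unfolding embp_def append_rows_def by (intro eq_matI) auto

lemma embpv_zero[simp]: "embpv (0\<^sub>v n :: 'a::field poly vec) = 0\<^sub>v n"
  unfolding embpv_def by (intro eq_vecI) auto

lemma embpv_zero_iff[simp]: "embpv v = 0\<^sub>v n \<longleftrightarrow> v = (0\<^sub>v n :: 'a::field poly vec)"
  unfolding embpv_def by (rule fract_hom.vec_hom_zero_iff)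

lemma embpv_inj: "embpv v = embpv w \<Longrightarrow> v = (w :: 'a::field poly vec)"
  unfolding embpv_def by (rule fract_hom.vec_hom_inj)

lemma constpv_zero_iff[simp]: "constpv w = 0\<^sub>v n \<longleftrightarrow> w = (0\<^sub>v n :: 'a::field vec)"
  unfolding constpv_def by (rule const_poly_hom.vec_hom_zero_iff)

lemma embpv_index: "i < dim_vec v \<Longrightarrow> embpv v $ i = Fract (v $ i) 1"
  unfolding embpv_def by simp

lemma embp_col: "j < dim_col P \<Longrightarrow> embpv (col P j) = col (embp P) j"
  unfolding embpv_def embp_def by (intro eq_vecI) auto

lemma embp_smult: "embp (c \<cdot>\<^sub>m P) = Fract c 1 \<cdot>\<^sub>m embp (P :: 'a::field poly mat)"
  unfolding embp_def by (intro eq_matI) auto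

lemma unimodular_with_inverse_append_rows:
  fixes K Kh Nh N :: "'a::field poly mat"
  assumes K: "K \<in> carrier_mat r c" and Kh: "Kh \<in> carrier_mat s c"
    and Nh: "Nh \<in> carrier_mat r c" and N: "N \<in> carrier_mat s c"
    and U: "unimodular_with_inverse (K @\<^sub>r Kh) (transpose_mat (Nh @\<^sub>r N))"
  shows "(K @\<^sub>r Kh) * transpose_mat (Nh @\<^sub>r N) = 1\<^sub>m (r + s)"
    "transpose_mat (Nh @\<^sub>r N) * (K @\<^sub>r Kh) = 1\<^sub>m c"
    "(embp K @\<^sub>r embp Kh) * transpose_mat (embp Nh @\<^sub>r embp N) = 1\<^sub>m (r + s)"
    "transpose_mat (embp Nh @\<^sub>r embp N) * (embp K @\<^sub>r embp Kh) = 1\<^sub>m c"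
proof -
  have KKh: "K @\<^sub>r Kh \<in> carrier_mat (r + s) c" and NhN: "transpose_mat (Nh @\<^sub>r N) \<in> carrier_mat c (r + s)"
    using K Kh Nh N by auto
  from U obtain k where kk: "K @\<^sub>r Kh \<in> carrier_mat k k"
    and UV: "(K @\<^sub>r Kh) * transpose_mat (Nh @\<^sub>r N) = 1\<^sub>m k"
    and VU: "transpose_mat (Nh @\<^sub>r N) * (K @\<^sub>r Kh) = 1\<^sub>m k"
    unfolding unimodular_with_inverse_def by auto
  have "k = r + s" "c = r + s"
    using carrier_matD[OF KKh] carrier_matD[OF kk] by simp_all
  with UV VU show poly: "(K @\<^sub>r Kh) * transpose_mat (Nh @\<^sub>r N) = 1\<^sub>m (r + s)"
    "transpose_mat (Nh @\<^sub>r N) * (K @\<^sub>r Kh) = 1\<^sub>m c"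
    by simp_all
  have "embp (K @\<^sub>r Kh) = embp K @\<^sub>r embp Kh" "embp (Nh @\<^sub>r N) = embp Nh @\<^sub>r embp N"
    using K Kh Nh N by (simp_all add: embp_append_rows)
  then show "(embp K @\<^sub>r embp Kh) * transpose_mat (embp Nh @\<^sub>r embp N) = 1\<^sub>m (r + s)"
    "transpose_mat (embp Nh @\<^sub>r embp N) * (embp K @\<^sub>r embp Kh) = 1\<^sub>m c"
    using embp_mult[OF KKh NhN] embp_mult[OF NhN KKh] poly by simp_all
qed

section \<open>Degrees of polynomial vectors and matrices\<close>

definition coeff_vec :: "'a::zero poly vec \<Rightarrow> nat \<Rightarrow> 'a vec" where
  "coeff_vec v k = map_vec (\<lambda>p. coeff p k) v"

definition coeff_mat :: "'a::zero poly mat \<Rightarrow> nat \<Rightarrow> 'a mat" where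
  "coeff_mat P k = map_mat (\<lambda>p. coeff p k) P"

lemma finite_degree_entries: "finite {degree (P $$ (i, j)) | i j. i < dim_row P \<and> j < dim_col P}"
proof -
  have "{degree (P $$ (i, j)) | i j. i < dim_row P \<and> j < dim_col P}
      = (\<lambda>(i, j). degree (P $$ (i, j))) ` ({..<dim_row P} \<times> {..<dim_col P})"
    by auto
  then show ?thesis by simp
qed

lemma vec_deg_le_iff: "vec_deg v \<le> k \<longleftrightarrow> (\<forall>i < dim_vec v. degree (v $ i) \<le> k)"
  unfolding vec_deg_def by (subst Max_le_iff) auto

lemma mat_deg_le_iff: "mat_deg P \<le> k \<longleftrightarrow> (\<forall>i < dim_row P. \<forall>j < dim_col P. degree (P $$ (i, j)) \<le> k)"
  unfolding mat_deg_def using finite_degree_entries[of P] by (subst Max_le_iff) auto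

lemma degree_le_vec_deg: "i < dim_vec v \<Longrightarrow> degree (v $ i) \<le> vec_deg v"
  using vec_deg_le_iff[of v "vec_deg v"] by auto

lemma degree_le_mat_deg: "i < dim_row P \<Longrightarrow> j < dim_col P \<Longrightarrow> degree (P $$ (i, j)) \<le> mat_deg P"
  using mat_deg_le_iff[of P "mat_deg P"] by auto

lemma vec_deg_zero[simp]: "vec_deg (0\<^sub>v n :: 'a::zero poly vec) = 0"
  using vec_deg_le_iff[of "0\<^sub>v n :: 'a poly vec" 0] by simp

lemma vec_deg_constpv[simp]: "vec_deg (constpv w) = 0"
  using vec_deg_le_iff[of "constpv w" 0] by (simp add: constpv_def)

lemma mat_deg_constp[simp]: "mat_deg (constp A) = 0"
  using mat_deg_le_iff[of "constp A" 0] by (simp add: constp_def)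

lemma coeff_vec_constpv[simp]: "coeff_vec (constpv w) 0 = w"
  unfolding coeff_vec_def constpv_def by (intro eq_vecI) auto

lemma col_deg_transpose[simp]: "i < dim_row P \<Longrightarrow> col_deg (transpose_mat P) i = row_deg P i"
  unfolding col_deg_def row_deg_def by simp

lemma coeff_vec_eq_0_iff: "coeff_vec v k = 0\<^sub>v n \<longleftrightarrow> dim_vec v = n \<and> (\<forall>i < n. coeff (v $ i) k = 0)"
  unfolding coeff_vec_def vec_eq_iff by auto

lemma vec_deg_attained:
  assumes "v \<noteq> 0\<^sub>v (dim_vec v)"
  shows "\<exists>i < dim_vec v. v $ i \<noteq> 0 \<and> degree (v $ i) = vec_deg v"
proof -
  obtain i where i: "i < dim_vec v" "v $ i \<noteq> 0"
    using assms by (metis eq_vecI index_zero_vec(1) index_zero_vec(2))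
  have "vec_deg v \<in> insert 0 {degree (v $ i) | i. i < dim_vec v}"
    unfolding vec_deg_def by (rule Max_in) auto
  then consider "vec_deg v = 0" | j where "j < dim_vec v" "degree (v $ j) = vec_deg v" "vec_deg v > 0"
    by (cases "vec_deg v = 0") auto
  then show ?thesis
  proof cases
    case 1
    then show ?thesis using i degree_le_vec_deg[OF i(1)] by auto
  next
    case 2
    then show ?thesis by (metis degree_0 less_irrefl)
  qed
qed

lemma coeff_vec_vec_deg_nonzero:
  assumes "v \<noteq> 0\<^sub>v (dim_vec v)"
  shows "coeff_vec v (vec_deg v) \<noteq> 0\<^sub>v (dim_vec v)"
proof -
  obtain i where "i < dim_vec v" "v $ i \<noteq> 0" "degree (v $ i) = vec_deg v"
    using vec_deg_attained[OF assms] by blast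
  then show ?thesis by (metis coeff_vec_eq_0_iff leading_coeff_0_iff)
qed

lemma le_vec_deg_if_coeff_vec_nonzero: "coeff_vec v k \<noteq> 0\<^sub>v (dim_vec v) \<Longrightarrow> k \<le> vec_deg v"
  by (auto simp: coeff_vec_eq_0_iff intro: le_trans[OF le_degree degree_le_vec_deg])

lemma vec_deg_less_if_coeff_vec_zero:
  "vec_deg v \<le> k \<Longrightarrow> coeff_vec v k = 0\<^sub>v (dim_vec v) \<Longrightarrow> v \<noteq> 0\<^sub>v (dim_vec v) \<Longrightarrow> vec_deg v < k"
  using coeff_vec_vec_deg_nonzero by (metis le_neq_implies_less)

lemma vec_deg_append: "vec_deg (v @\<^sub>v w) = max (vec_deg v) (vec_deg w)"
proof (rule antisym)
  show "vec_deg (v @\<^sub>v w) \<le> max (vec_deg v) (vec_deg w)"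
    unfolding vec_deg_le_iff using degree_le_vec_deg[of _ v] degree_le_vec_deg[of _ w]
    by (auto simp: max.coboundedI1 max.coboundedI2)
  have "vec_deg v \<le> vec_deg (v @\<^sub>v w)"
    unfolding vec_deg_le_iff using degree_le_vec_deg[of _ "v @\<^sub>v w"] by (metis index_append_vec trans_less_add1)
  moreover have "vec_deg w \<le> vec_deg (v @\<^sub>v w)"
    unfolding vec_deg_le_iff using degree_le_vec_deg[of "dim_vec v + _" "v @\<^sub>v w"] by auto
  ultimately show "max (vec_deg v) (vec_deg w) \<le> vec_deg (v @\<^sub>v w)" by simp
qed

lemma vec_deg_uminus[simp]: "vec_deg (- v) = vec_deg (v :: 'a::comm_ring poly vec)"
proof (rule antisym)
  show "vec_deg (- v) \<le> vec_deg v" unfolding vec_deg_le_iff using degree_le_vec_deg[of _ v] by auto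
  show "vec_deg v \<le> vec_deg (- v)" unfolding vec_deg_le_iff using degree_le_vec_deg[of _ "- v"] by auto
qed

lemma vec_deg_add_le:
  "dim_vec v = dim_vec w \<Longrightarrow> vec_deg (v + w) \<le> max (vec_deg v) (vec_deg (w :: 'a::comm_ring poly vec))"
  unfolding vec_deg_le_iff using degree_le_vec_deg[of _ v] degree_le_vec_deg[of _ w]
  by (auto intro!: degree_add_le simp: max.coboundedI1 max.coboundedI2)

lemma vec_deg_mult_mat_vec_le:
  assumes "P \<in> carrier_mat n k" "v \<in> carrier_vec k"
  shows "vec_deg (P *\<^sub>v v) \<le> mat_deg P + vec_deg (v :: 'a::comm_ring_1 poly vec)"
  unfolding vec_deg_le_iff
proof (intro allI impI)
  fix i assume "i < dim_vec (P *\<^sub>v v)"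
  then have "(P *\<^sub>v v) $ i = (\<Sum>j<k. P $$ (i, j) * v $ j)" and i: "i < n"
    using assms by (auto simp: scalar_prod_def intro: sum.cong)
  moreover have "degree (P $$ (i, j) * v $ j) \<le> mat_deg P + vec_deg v" if "j < k" for j
    using degree_mult_le[of "P $$ (i, j)" "v $ j"] degree_le_mat_deg[of i P j] degree_le_vec_deg[of j v]
      assms i that by fastforce
  ultimately show "degree ((P *\<^sub>v v) $ i) \<le> mat_deg P + vec_deg v"
    by (auto intro: degree_sum_le)
qed

lemma mat_deg_mult_le:
  assumes "P \<in> carrier_mat n k" "Q \<in> carrier_mat k l"
  shows "mat_deg (P * Q) \<le> mat_deg P + mat_deg (Q :: 'a::comm_ring_1 poly mat)"
  unfolding mat_deg_le_iff
proof (intro allI impI)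
  fix i j assume "i < dim_row (P * Q)" "j < dim_col (P * Q)"
  then have "(P * Q) $$ (i, j) = (\<Sum>t<k. P $$ (i, t) * Q $$ (t, j))" and ij: "i < n" "j < l"
    using assms by (auto simp: scalar_prod_def intro: sum.cong)
  moreover have "degree (P $$ (i, t) * Q $$ (t, j)) \<le> mat_deg P + mat_deg Q" if "t < k" for t
    using degree_mult_le[of "P $$ (i, t)" "Q $$ (t, j)"] degree_le_mat_deg[of i P t]
      degree_le_mat_deg[of t Q j] assms ij that by fastforce
  ultimately show "degree ((P * Q) $$ (i, j)) \<le> mat_deg P + mat_deg Q"
    by (auto intro: degree_sum_le)
qed

lemma coeff_mult_at_degree_bound:
  assumes "degree p \<le> a" "degree q \<le> b"
  shows "coeff (p * q) (a + b) = coeff p a * coeff (q :: 'a::comm_semiring_1 poly) b"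
proof (cases "degree p = a \<and> degree q = b")
  case True
  then show ?thesis using coeff_mult_degree_sum[of p q] by simp
next
  case False
  then have "degree p < a \<or> degree q < b" using assms by auto
  moreover from this have "degree (p * q) < a + b" using degree_mult_le[of p q] assms by linarith
  ultimately show ?thesis by (auto simp: coeff_eq_0)
qed

lemma coeff_vec_mult_mat_vec:
  assumes P: "P \<in> carrier_mat n k" and v: "v \<in> carrier_vec k"
    and "mat_deg P \<le> d" "vec_deg v \<le> e"
  shows "coeff_vec (P *\<^sub>v v) (d + e) = coeff_mat P d *\<^sub>v coeff_vec (v :: 'a::comm_ring_1 poly vec) e"
proof (rule eq_vecI)
  fix i assume "i < dim_vec (coeff_mat P d *\<^sub>v coeff_vec v e)"
  then have i: "i < n" using P by (simp add: coeff_mat_def)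
  have "coeff ((P *\<^sub>v v) $ i) (d + e) = (\<Sum>j<k. coeff (P $$ (i, j) * v $ j) (d + e))"
    using P v i by (simp add: scalar_prod_def coeff_sum lessThan_atLeast0)
  also have "\<dots> = (\<Sum>j<k. coeff (P $$ (i, j)) d * coeff (v $ j) e)"
    using assms i degree_le_mat_deg[of i P] degree_le_vec_deg[of _ v]
    by (intro sum.cong refl coeff_mult_at_degree_bound) (auto intro: le_trans)
  finally show "coeff_vec (P *\<^sub>v v) (d + e) $ i = (coeff_mat P d *\<^sub>v coeff_vec v e) $ i"
    using P v i by (simp add: coeff_vec_def coeff_mat_def scalar_prod_def lessThan_atLeast0)
qed (use P in \<open>simp add: coeff_vec_def coeff_mat_def\<close>)

lemma degree_le_row_deg: "i < dim_row N \<Longrightarrow> j < dim_col N \<Longrightarrow> degree (N $$ (i, j)) \<le> row_deg N i"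
  unfolding row_deg_def using degree_le_vec_deg[of j "row N i"] by simp

lemma mat_deg_eq_row_deg:
  assumes N: "N \<in> carrier_mat k c" and "k > 0" and rd: "\<forall>i<k. row_deg N i = d"
  shows "mat_deg N = d"
proof (rule antisym)
  show "mat_deg N \<le> d"
    unfolding mat_deg_le_iff using N rd degree_le_row_deg[of _ N] by fastforce
  show "d \<le> mat_deg N"
  proof (cases "row N 0 = 0\<^sub>v c")
    case True
    then show ?thesis using rd \<open>k > 0\<close> by (auto simp: row_deg_def)
  next
    case False
    then obtain j where "j < c" "degree (row N 0 $ j) = vec_deg (row N 0)"
      using vec_deg_attained[of "row N 0"] N by auto
    then show ?thesis using degree_le_mat_deg[of 0 N j] N rd \<open>k > 0\<close> by (auto simp: row_deg_def)
  qed
qed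

section \<open>Polynomial bases of rational subspaces\<close>

lemma poly_col_basis_col:
  assumes basis: "poly_col_basis d H V" and j: "j < dim_col H"
  shows "col H j \<noteq> 0\<^sub>v (dim_row H)" "embpv (col H j) \<in> V"
proof -
  have col_eq: "embpv (col H j) = embp H *\<^sub>v unit_vec (dim_col H) j"
    using mult_unit_vec[of "embp H" "dim_row H" "dim_col H" j] j embp_col[OF j] by simp
  from basis have indep: "\<And>c. c \<in> carrier_vec (dim_col H) \<Longrightarrow> embp H *\<^sub>v c = 0\<^sub>v d \<Longrightarrow> c = 0\<^sub>v (dim_col H)"
    and V: "V = {embp H *\<^sub>v c | c. c \<in> carrier_vec (dim_col H)}" and d: "dim_row H = d"
    unfolding poly_col_basis_def by auto
  show "embpv (col H j) \<in> V" unfolding V col_eq by auto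
  show "col H j \<noteq> 0\<^sub>v (dim_row H)"
  proof
    assume "col H j = 0\<^sub>v (dim_row H)"
    then have "unit_vec (dim_col H) j = (0\<^sub>v (dim_col H) :: 'a rat_fun vec)"
      using col_eq d by (intro indep) auto
    then show False using j by (metis index_unit_vec(1) index_zero_vec(1) zero_neq_one)
  qed
qed

lemma poly_col_basis_dim_col_le:
  fixes H1 H2 :: "'a::field poly mat"
  assumes basis1: "poly_col_basis d H1 V" and basis2: "poly_col_basis d H2 V"
  shows "dim_col H1 \<le> dim_col H2"
proof (rule ccontr)
  define l1 where "l1 = dim_col H1"
  define l2 where "l2 = dim_col H2"
  assume "\<not> dim_col H1 \<le> dim_col H2"
  then have "l2 < l1" unfolding l1_def l2_def by simp
  from basis1 have indep: "\<And>c. c \<in> carrier_vec l1 \<Longrightarrow> embp H1 *\<^sub>v c = 0\<^sub>v d \<Longrightarrow> c = 0\<^sub>v l1"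
    unfolding poly_col_basis_def l1_def by auto
  have H1: "embp H1 \<in> carrier_mat d l1"
    using basis1 unfolding poly_col_basis_def l1_def by (intro carrier_matI) simp_all
  have H2: "embp H2 \<in> carrier_mat d l2"
    using basis2 unfolding poly_col_basis_def l2_def by (intro carrier_matI) simp_all
  from basis2 have V: "V = {embp H2 *\<^sub>v c | c. c \<in> carrier_vec l2}"
    unfolding poly_col_basis_def l2_def by simp
  have "\<exists>c. c \<in> carrier_vec l2 \<and> col (embp H1) j = embp H2 *\<^sub>v c" if j: "j < l1" for j
  proof -
    have jH1: "j < dim_col H1" using j unfolding l1_def .
    have "embpv (col H1 j) \<in> V" by (rule poly_col_basis_col(2)[OF basis1 jH1])
    then show ?thesis unfolding embp_col[OF jH1] V by blast
  qed
  then obtain X where X: "X \<in> carrier_mat l2 l1" and H21: "embp H2 * X = embp H1"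
    using col_span_factorization[OF H1 H2] by blast
  obtain v where v: "v \<in> carrier_vec l1" "v \<noteq> 0\<^sub>v l1" "X *\<^sub>v v = 0\<^sub>v l2"
    using wide_mat_kernel_nonzero[OF X \<open>l2 < l1\<close>] by blast
  have "embp H1 *\<^sub>v v = embp H2 *\<^sub>v (X *\<^sub>v v)"
    unfolding H21[symmetric] using H2 X v by simp
  also have "\<dots> = 0\<^sub>v d" unfolding v(3) by (rule mult_mat_vec_zero[OF H2])
  finally show False using indep v by simp
qed

lemma poly_col_basis_mult:
  fixes Z H :: "'a::field poly mat"
  assumes Z: "Z \<in> carrier_mat d' d" and basis: "poly_col_basis d H V"
    and maps_to: "\<And>h. h \<in> V \<Longrightarrow> embp Z *\<^sub>v h \<in> V'"
    and onto: "\<And>z. z \<in> V' \<Longrightarrow> \<exists>h \<in> V. z = embp Z *\<^sub>v h"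
    and inj: "\<And>h. h \<in> V \<Longrightarrow> embp Z *\<^sub>v h = 0\<^sub>v d' \<Longrightarrow> h = 0\<^sub>v d"
  shows "poly_col_basis d' (Z * H) V'"
proof -
  define l where "l = dim_col H"
  have H: "H \<in> carrier_mat d l"
    using basis unfolding poly_col_basis_def l_def by (intro carrier_matI) simp_all
  from basis have indep: "\<And>c. c \<in> carrier_vec l \<Longrightarrow> embp H *\<^sub>v c = 0\<^sub>v d \<Longrightarrow> c = 0\<^sub>v l"
    and V: "V = {embp H *\<^sub>v c | c. c \<in> carrier_vec l}"
    unfolding poly_col_basis_def l_def by auto
  have ZH: "embp (Z * H) *\<^sub>v c = embp Z *\<^sub>v (embp H *\<^sub>v c)" if "c \<in> carrier_vec l" for c
    using embp_mult[OF Z H] Z H that by simp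
  have in_V: "embp H *\<^sub>v c \<in> V" if "c \<in> carrier_vec l" for c
    unfolding V using that by blast
  have span: "V' = {embp (Z * H) *\<^sub>v c | c. c \<in> carrier_vec l}"
  proof (intro equalityI subsetI)
    fix z assume "z \<in> V'"
    then obtain h where h: "h \<in> V" "z = embp Z *\<^sub>v h" using onto by blast
    from h(1) obtain c where c: "c \<in> carrier_vec l" "h = embp H *\<^sub>v c" unfolding V by blast
    have "z = embp (Z * H) *\<^sub>v c" unfolding h(2) c(2) ZH[OF c(1)] ..
    with c(1) show "z \<in> {embp (Z * H) *\<^sub>v c | c. c \<in> carrier_vec l}" by blast
  next
    fix z assume "z \<in> {embp (Z * H) *\<^sub>v c | c. c \<in> carrier_vec l}"
    then obtain c where c: "c \<in> carrier_vec l" "z = embp (Z * H) *\<^sub>v c" by blast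
    show "z \<in> V'" unfolding c(2) ZH[OF c(1)] by (rule maps_to[OF in_V[OF c(1)]])
  qed
  have indep': "c = 0\<^sub>v l" if c: "c \<in> carrier_vec l" and zero: "embp (Z * H) *\<^sub>v c = 0\<^sub>v d'" for c
  proof -
    have "embp H *\<^sub>v c = 0\<^sub>v d" using inj[OF in_V[OF c]] zero ZH[OF c] by simp
    then show ?thesis by (rule indep[OF c])
  qed
  have dims: "dim_row (Z * H) = d'" "dim_col (Z * H) = l" using Z H by simp_all
  show ?thesis
    unfolding poly_col_basis_def dims using span indep' by blast
qed

definition one_mat_with_col :: "nat \<Rightarrow> nat \<Rightarrow> 'a::field vec \<Rightarrow> 'a mat" where
  "one_mat_with_col k i0 w = mat k k (\<lambda>(i, j). if j = i0 then w $ i else if i = j then 1 else 0)"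

lemma one_mat_with_col_carrier[simp]: "one_mat_with_col k i0 w \<in> carrier_mat k k"
  and one_mat_with_col_dims[simp]: "dim_row (one_mat_with_col k i0 w) = k" "dim_col (one_mat_with_col k i0 w) = k"
  unfolding one_mat_with_col_def by simp_all

lemma one_mat_with_col_mult_vec:
  assumes x: "x \<in> carrier_vec k" and i: "i < k" and i0: "i0 < k"
  shows "(one_mat_with_col k i0 w *\<^sub>v x) $ i = w $ i * x $ i0 + (if i = i0 then 0 else x $ i)"
proof -
  have "(one_mat_with_col k i0 w *\<^sub>v x) $ i
      = (\<Sum>j<k. (if j = i0 then w $ i * x $ j else 0) + (if j = i then (if i = i0 then 0 else x $ j) else 0))"
    using x i unfolding one_mat_with_col_def
    by (auto simp: scalar_prod_def lessThan_atLeast0 intro: sum.cong)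
  also have "\<dots> = w $ i * x $ i0 + (if i = i0 then 0 else x $ i)"
    using i i0 by (simp add: sum.distrib)
  finally show ?thesis .
qed

lemma one_mat_with_col_inj:
  assumes x: "x \<in> carrier_vec k" and i0: "i0 < k" "w $ i0 \<noteq> 0"
    and zero: "one_mat_with_col k i0 w *\<^sub>v x = 0\<^sub>v k"
  shows "x = 0\<^sub>v k"
proof -
  have entry: "w $ i * x $ i0 + (if i = i0 then 0 else x $ i) = 0" if "i < k" for i
    using one_mat_with_col_mult_vec[OF x that i0(1), of w] zero that by simp
  then have "x $ i0 = 0" using i0 by fastforce
  show ?thesis
  proof (rule eq_vecI)
    fix i assume "i < dim_vec (0\<^sub>v k :: 'a vec)"
    then show "x $ i = 0\<^sub>v k $ i" using entry[of i] \<open>x $ i0 = 0\<close> by (cases "i = i0") auto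
  qed (use x in simp)
qed

lemma one_mat_with_col_surj:
  assumes y: "y \<in> carrier_vec k" and i0: "i0 < k" "w $ i0 \<noteq> 0"
  shows "\<exists>x \<in> carrier_vec k. one_mat_with_col k i0 w *\<^sub>v x = y"
proof -
  define x where "x = vec k (\<lambda>i. if i = i0 then y $ i0 / w $ i0 else y $ i - y $ i0 / w $ i0 * w $ i)"
  have x: "x \<in> carrier_vec k" unfolding x_def by simp
  have "one_mat_with_col k i0 w *\<^sub>v x = y"
  proof (rule eq_vecI)
    fix i assume "i < dim_vec y"
    then have i: "i < k" using y by simp
    show "(one_mat_with_col k i0 w *\<^sub>v x) $ i = y $ i"
      unfolding one_mat_with_col_mult_vec[OF x i i0(1)] using i i0 by (auto simp: x_def field_simps)
  qed (use y in simp)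
  with x show ?thesis by blast
qed

lemma embc_one_mat_with_col:
  "w \<in> carrier_vec k \<Longrightarrow> embc (one_mat_with_col k i0 w) = one_mat_with_col k i0 (embpv (constpv w))"
  unfolding embc_def embp_def constp_def one_mat_with_col_def embpv_def constpv_def
  by (intro eq_matI) auto

lemma poly_col_basis_mult_constp:
  fixes H :: "'a::field poly mat" and T :: "'a mat"
  assumes basis: "poly_col_basis c H V" and H: "H \<in> carrier_mat c k" and T: "T \<in> carrier_mat k k"
    and inj: "\<And>x. x \<in> carrier_vec k \<Longrightarrow> embc T *\<^sub>v x = 0\<^sub>v k \<Longrightarrow> x = 0\<^sub>v k"
    and surj: "\<And>y. y \<in> carrier_vec k \<Longrightarrow> \<exists>x \<in> carrier_vec k. embc T *\<^sub>v x = y"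
  shows "poly_col_basis c (H * constp T) V"
proof -
  have HT: "embp (H * constp T) *\<^sub>v x = embp H *\<^sub>v (embc T *\<^sub>v x)" if "x \<in> carrier_vec k" for x
    using embp_mult[OF H, of "constp T" k] T H that by (simp add: embc_def)
  from basis H have indep: "\<And>x. x \<in> carrier_vec k \<Longrightarrow> embp H *\<^sub>v x = 0\<^sub>v c \<Longrightarrow> x = 0\<^sub>v k"
    and V: "V = {embp H *\<^sub>v x | x. x \<in> carrier_vec k}"
    unfolding poly_col_basis_def by auto
  have "V = {embp (H * constp T) *\<^sub>v x | x. x \<in> carrier_vec k}"
  proof (intro equalityI subsetI)
    fix v assume "v \<in> V"
    then obtain y x where "v = embp H *\<^sub>v y" and x: "x \<in> carrier_vec k" and "embc T *\<^sub>v x = y"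
      unfolding V using surj by blast
    then have "v = embp (H * constp T) *\<^sub>v x" using HT[OF x] by simp
    then show "v \<in> {embp (H * constp T) *\<^sub>v x | x. x \<in> carrier_vec k}" using x by blast
  next
    fix v assume "v \<in> {embp (H * constp T) *\<^sub>v x | x. x \<in> carrier_vec k}"
    then obtain x where "x \<in> carrier_vec k" "v = embp H *\<^sub>v (embc T *\<^sub>v x)" using HT by auto
    then show "v \<in> V" unfolding V using T by (auto intro!: exI[of _ "embc T *\<^sub>v x"])
  qed
  moreover have "x = 0\<^sub>v k" if x: "x \<in> carrier_vec k" and zero: "embp (H * constp T) *\<^sub>v x = 0\<^sub>v c" for x
  proof -
    have "embc T *\<^sub>v x \<in> carrier_vec k" using T x by simp
    moreover have "embp H *\<^sub>v (embc T *\<^sub>v x) = 0\<^sub>v c" using zero HT[OF x] by simp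
    ultimately have "embc T *\<^sub>v x = 0\<^sub>v k" by (rule indep)
    then show ?thesis by (rule inj[OF x])
  qed
  ultimately show ?thesis
    using H T unfolding poly_col_basis_def by simp
qed

lemma minimal_col_basis_col_deg_le:
  fixes H :: "'a::field poly mat"
  assumes min: "minimal_col_basis c H V" and H: "H \<in> carrier_mat c k"
    and i0: "i0 < k" and w: "w \<in> carrier_vec k" "w $ i0 \<noteq> 0"
  shows "col_deg H i0 \<le> vec_deg (H *\<^sub>v constpv w)"
proof -
  \<comment> \<open>H T is a basis of V that differs from H only in column i0, which becomes H w.\<close>
  define T where "T = one_mat_with_col k i0 w"
  have T: "T \<in> carrier_mat k k" unfolding T_def by simp
  have embc_T: "embc T = one_mat_with_col k i0 (embpv (constpv w))"
    unfolding T_def using w(1) by (rule embc_one_mat_with_col)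
  have w': "embpv (constpv w) $ i0 \<noteq> 0"
    using w i0 by (simp add: embpv_index constpv_def)
  from min have basis: "poly_col_basis c H V"
    and least: "\<And>H'. poly_col_basis c H' V \<Longrightarrow> (\<Sum>j<k. col_deg H j) \<le> (\<Sum>j<dim_col H'. col_deg H' j)"
    using H unfolding minimal_col_basis_def by auto
  have "poly_col_basis c (H * constp T) V"
    using basis H T
  proof (rule poly_col_basis_mult_constp)
    show "x = 0\<^sub>v k" if "x \<in> carrier_vec k" "embc T *\<^sub>v x = 0\<^sub>v k" for x
      using one_mat_with_col_inj[OF that(1) i0 w'] that(2) by (simp add: embc_T)
    show "\<exists>x \<in> carrier_vec k. embc T *\<^sub>v x = y" if "y \<in> carrier_vec k" for y
      using one_mat_with_col_surj[OF that i0 w'] by (simp add: embc_T)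
  qed
  then have sums: "(\<Sum>j<k. col_deg H j) \<le> (\<Sum>j<k. col_deg (H * constp T) j)"
    using least[of "H * constp T"] T by simp
  have col_T: "col (constp T) j = (if j = i0 then constpv w else unit_vec k j)" if "j < k" for j
    using that w i0 unfolding T_def one_mat_with_col_def constp_def constpv_def
    by (intro eq_vecI) (auto simp: unit_vec_def)
  have col_HT: "col (H * constp T) j = (if j = i0 then H *\<^sub>v constpv w else col H j)" if "j < k" for j
    using col_mult2[OF H _ that, of "constp T"] T col_T[OF that] mult_unit_vec[OF H that] by simp
  have "(\<Sum>j<k. col_deg H j) = col_deg H i0 + (\<Sum>j\<in>{..<k} - {i0}. col_deg H j)"
    using i0 by (simp add: sum.remove)
  moreover have "(\<Sum>j<k. col_deg (H * constp T) j) = vec_deg (H *\<^sub>v constpv w) + (\<Sum>j\<in>{..<k} - {i0}. col_deg H j)"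
    using i0 col_HT by (simp add: sum.remove col_deg_def)
  ultimately show ?thesis using sums by simp
qed

text \<open>The polynomial left inverse W is what keeps preimages of polynomial bases polynomial.\<close>

locale poly_null_space_iso =
  fixes Z W :: "'a::field poly mat" and d d' e :: nat and V V' :: "'a rat_fun vec set"
  assumes Z: "Z \<in> carrier_mat d' d" and W: "W \<in> carrier_mat d d'" and WZ: "W * Z = 1\<^sub>m d"
    and V: "V \<subseteq> carrier_vec d"
    and maps_to: "\<And>h. h \<in> V \<Longrightarrow> embp Z *\<^sub>v h \<in> V'"
    and onto: "\<And>z. z \<in> V' \<Longrightarrow> \<exists>h \<in> V. z = embp Z *\<^sub>v h"
    and deg: "\<And>h. h \<in> carrier_vec d \<Longrightarrow> h \<noteq> 0\<^sub>v d \<Longrightarrow> embpv h \<in> V \<Longrightarrow> vec_deg (Z *\<^sub>v h) = e + vec_deg h"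
begin

lemma W_Z_mult_vec: "h \<in> V \<Longrightarrow> embp W *\<^sub>v (embp Z *\<^sub>v h) = h"
proof -
  assume "h \<in> V"
  then have h: "h \<in> carrier_vec d" using V by auto
  have "embp W * embp Z = 1\<^sub>m d" using embp_mult[OF W Z] WZ by simp
  then have "(embp W * embp Z) *\<^sub>v h = h" using h by simp
  then show ?thesis using assoc_mult_mat_vec[of "embp W" d d' "embp Z" d h] W Z h by simp
qed

lemma Z_W_mult_vec:
  assumes "z \<in> V'"
  shows "embp Z *\<^sub>v (embp W *\<^sub>v z) = z"
proof -
  obtain h where "h \<in> V" "z = embp Z *\<^sub>v h" using onto[OF assms] by blast
  then show ?thesis using W_Z_mult_vec by simp
qed

lemma poly_col_basis_image: "poly_col_basis d H V \<Longrightarrow> poly_col_basis d' (Z * H) V'"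
  using Z _ maps_to onto
proof (rule poly_col_basis_mult)
  show "h = 0\<^sub>v d" if "h \<in> V" "embp Z *\<^sub>v h = 0\<^sub>v d'" for h
    using W_Z_mult_vec[OF that(1)] that(2) mult_mat_vec_zero[of "embp W" d d'] W by simp
qed

lemma poly_col_basis_preimage: "poly_col_basis d' H' V' \<Longrightarrow> poly_col_basis d (W * H') V"
  using W
proof (rule poly_col_basis_mult)
  show "embp W *\<^sub>v z \<in> V" if z: "z \<in> V'" for z
  proof -
    obtain h where "h \<in> V" "z = embp Z *\<^sub>v h" using onto[OF z] by blast
    then show ?thesis using W_Z_mult_vec by simp
  qed
  show "\<exists>z \<in> V'. h = embp W *\<^sub>v z" if "h \<in> V" for h
    using maps_to[OF that] W_Z_mult_vec[OF that] by (intro bexI[of _ "embp Z *\<^sub>v h"]) simp_all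
  show "z = 0\<^sub>v d'" if "z \<in> V'" "embp W *\<^sub>v z = 0\<^sub>v d" for z
    using Z_W_mult_vec[OF that(1)] that(2) mult_mat_vec_zero[of "embp Z" d' d] Z by simp
qed

lemma col_deg_image:
  assumes basis: "poly_col_basis d H V" and j: "j < dim_col H"
  shows "col_deg (Z * H) j = e + col_deg H j"
proof -
  have d: "dim_row H = d" using basis unfolding poly_col_basis_def by simp
  have "col H j \<in> carrier_vec d" "col H j \<noteq> 0\<^sub>v d" "embpv (col H j) \<in> V"
    using poly_col_basis_col[OF basis j] d by (simp_all add: carrier_vecI)
  then have "vec_deg (Z *\<^sub>v col H j) = e + vec_deg (col H j)" by (rule deg)
  moreover have "col (Z * H) j = Z *\<^sub>v col H j"
    using col_mult2[OF Z carrier_matI[OF d refl] j] .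
  ultimately show ?thesis unfolding col_deg_def by simp
qed

lemma col_deg_preimage:
  assumes basis': "poly_col_basis d' H' V'" and j: "j < dim_col H'"
  shows "col_deg H' j = e + col_deg (W * H') j"
proof -
  define c where "c = W *\<^sub>v col H' j"
  have d': "dim_row H' = d'" using basis' unfolding poly_col_basis_def by simp
  have col_H': "col H' j \<in> carrier_vec d'" using d' by (simp add: carrier_vecI)
  have c: "c \<in> carrier_vec d" unfolding c_def using W col_H' by simp
  have col_WH': "col (W * H') j = c"
    unfolding c_def using col_mult2[OF W carrier_matI[OF d' refl] j] .
  have "embpv (col H' j) \<in> V'" by (rule poly_col_basis_col(2)[OF basis' j])
  then have "embpv (col H' j) = embp Z *\<^sub>v (embp W *\<^sub>v embpv (col H' j))"
    by (rule Z_W_mult_vec[symmetric])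
  also have "\<dots> = embpv (Z *\<^sub>v c)"
    unfolding c_def embp_mult_vec[OF W col_H'] embp_mult_vec[OF Z c[unfolded c_def]] ..
  finally have col_eq: "col H' j = Z *\<^sub>v c" by (rule embpv_inj)
  have "c \<noteq> 0\<^sub>v d"
  proof
    assume "c = 0\<^sub>v d"
    then have "col H' j = 0\<^sub>v d'" using col_eq mult_mat_vec_zero[OF Z] by simp
    then show False using poly_col_basis_col(1)[OF basis' j] d' by simp
  qed
  moreover have "embpv (col (W * H') j) \<in> V"
    by (rule poly_col_basis_col(2)[OF poly_col_basis_preimage[OF basis']]) (use j W in simp)
  then have "embpv c \<in> V" unfolding col_WH' .
  ultimately have "vec_deg (Z *\<^sub>v c) = e + vec_deg c" by (rule deg[OF c])
  then show ?thesis unfolding col_deg_def col_eq col_WH' .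
qed

lemma minimal_col_basis_image:
  assumes min: "minimal_col_basis d H V"
  shows "minimal_col_basis d' (Z * H) V'"
proof -
  from min have basis: "poly_col_basis d H V"
    and least: "\<And>H''. poly_col_basis d H'' V \<Longrightarrow> (\<Sum>j<dim_col H. col_deg H j) \<le> (\<Sum>j<dim_col H''. col_deg H'' j)"
    unfolding minimal_col_basis_def by auto
  have "(\<Sum>j<dim_col (Z * H). col_deg (Z * H) j) \<le> (\<Sum>j<dim_col H'. col_deg H' j)"
    if basis': "poly_col_basis d' H' V'" for H'
  proof -
    let ?l = "dim_col H" and ?l' = "dim_col H'"
    have basis'': "poly_col_basis d (W * H') V" by (rule poly_col_basis_preimage[OF basis'])
    then have "?l \<le> ?l'" and "(\<Sum>j<?l. col_deg H j) \<le> (\<Sum>j<?l'. col_deg (W * H') j)"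
      using poly_col_basis_dim_col_le[OF basis basis''] least[OF basis''] by simp_all
    then have "?l * e + (\<Sum>j<?l. col_deg H j) \<le> ?l' * e + (\<Sum>j<?l'. col_deg (W * H') j)"
      by (intro add_mono mult_right_mono) auto
    moreover have "(\<Sum>j<?l. col_deg (Z * H) j) = (\<Sum>j<?l. e + col_deg H j)"
      by (rule sum.cong) (simp_all add: col_deg_image[OF basis])
    moreover have "(\<Sum>j<?l'. col_deg H' j) = (\<Sum>j<?l'. e + col_deg (W * H') j)"
      by (rule sum.cong) (simp_all add: col_deg_preimage[OF basis'])
    ultimately show ?thesis by (simp add: sum.distrib)
  qed
  with poly_col_basis_image[OF basis] show ?thesis
    unfolding minimal_col_basis_def by blast
qed

end

section \<open>Predictable degree property of minimal bases\<close>

lemma minimal_basis_coeff_mat_inj: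
  fixes N :: "'a::field poly mat"
  assumes N: "N \<in> carrier_mat k c" and min: "minimal_basis N" and rd: "\<forall>i<k. row_deg N i = d"
    and u: "u \<in> carrier_vec k" and zero: "transpose_mat (coeff_mat N d) *\<^sub>v u = 0\<^sub>v c"
  shows "u = 0\<^sub>v k"
proof (rule ccontr)
  assume "u \<noteq> 0\<^sub>v k"
  then obtain i0 where i0: "i0 < k" "u $ i0 \<noteq> 0" using u by (metis eq_vecI index_zero_vec carrier_vecD)
  let ?y = "transpose_mat N *\<^sub>v constpv u"
  have NT: "transpose_mat N \<in> carrier_mat c k" using N by simp
  from min have min': "minimal_col_basis c (transpose_mat N) {embp (transpose_mat N) *\<^sub>v x | x. x \<in> carrier_vec k}"
    using N unfolding minimal_basis_def by simp
  have "mat_deg (transpose_mat N) \<le> d"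
    unfolding mat_deg_le_iff using N rd degree_le_row_deg[of _ N] by fastforce
  then have "coeff_vec ?y d = transpose_mat (coeff_mat N d) *\<^sub>v u"
    using coeff_vec_mult_mat_vec[OF NT _ _ order_refl, of "constpv u" d] u
    by (simp add: coeff_mat_def map_mat_transpose)
  moreover have "vec_deg ?y \<le> d"
    using vec_deg_mult_mat_vec_le[OF NT, of "constpv u"] u \<open>mat_deg (transpose_mat N) \<le> d\<close> by simp
  moreover have "?y \<noteq> 0\<^sub>v c"
  proof
    assume "?y = 0\<^sub>v c"
    then have "embp (transpose_mat N) *\<^sub>v embpv (constpv u) = 0\<^sub>v c"
      using embp_mult_vec[OF NT, of "constpv u"] u by simp
    moreover have "embpv (constpv u) \<in> carrier_vec k" using u by simp
    ultimately have "embpv (constpv u) = 0\<^sub>v k"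
      using min' NT unfolding minimal_col_basis_def poly_col_basis_def by blast
    then show False using \<open>u \<noteq> 0\<^sub>v k\<close> by simp
  qed
  ultimately have "vec_deg ?y < d"
    using vec_deg_less_if_coeff_vec_zero[of ?y d] NT zero by simp
  moreover have "d \<le> vec_deg ?y"
    using minimal_col_basis_col_deg_le[OF min' NT i0(1) u i0(2)] rd i0 N by simp
  ultimately show False by simp
qed

lemma minimal_basis_predictable_degree:
  fixes N :: "'a::field poly mat"
  assumes N: "N \<in> carrier_mat k c" and min: "minimal_basis N" and rd: "\<forall>i<k. row_deg N i = d"
    and w: "w \<in> carrier_vec k" "w \<noteq> 0\<^sub>v k"
  shows "vec_deg (transpose_mat N *\<^sub>v w) = d + vec_deg w"
proof (rule antisym)
  have NT: "transpose_mat N \<in> carrier_mat c k" using N by simp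
  have deg_N: "mat_deg (transpose_mat N) \<le> d"
    unfolding mat_deg_le_iff using N rd degree_le_row_deg[of _ N] by fastforce
  then show "vec_deg (transpose_mat N *\<^sub>v w) \<le> d + vec_deg w"
    using vec_deg_mult_mat_vec_le[OF NT w(1)] by simp
  have "coeff_vec w (vec_deg w) \<noteq> 0\<^sub>v k"
    using coeff_vec_vec_deg_nonzero[of w] w by simp
  then have "transpose_mat (coeff_mat N d) *\<^sub>v coeff_vec w (vec_deg w) \<noteq> 0\<^sub>v c"
    using minimal_basis_coeff_mat_inj[OF N min rd] w by (auto simp: coeff_vec_def)
  moreover have "coeff_vec (transpose_mat N *\<^sub>v w) (d + vec_deg w)
      = transpose_mat (coeff_mat N d) *\<^sub>v coeff_vec w (vec_deg w)"
    using coeff_vec_mult_mat_vec[OF NT w(1) deg_N order_refl] by (simp add: coeff_mat_def map_mat_transpose)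
  ultimately show "d + vec_deg w \<le> vec_deg (transpose_mat N *\<^sub>v w)"
    using le_vec_deg_if_coeff_vec_nonzero[of "transpose_mat N *\<^sub>v w"] NT by simp
qed

lemma vec_deg_le_coordinates_degree_one_basis:
  fixes K :: "'a::field poly mat" and Kh :: "'a mat"
  assumes K: "K \<in> carrier_mat r c" and min: "minimal_basis K" and rd: "\<forall>i<r. row_deg K i = 1"
    and Kh: "Kh \<in> carrier_mat s c" and w: "w \<in> carrier_vec r" and u: "u \<in> carrier_vec s"
    and v: "v = transpose_mat K *\<^sub>v w + transpose_mat (constp Kh) *\<^sub>v u"
    and deg_v: "vec_deg v \<le> e + 1" and deg_u: "vec_deg u \<le> e + 1"
  shows "vec_deg w \<le> e"
proof (cases "w = 0\<^sub>v r")
  case False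
  let ?Kw = "transpose_mat K *\<^sub>v w" and ?Khu = "transpose_mat (constp Kh) *\<^sub>v u"
  have Khu: "?Khu \<in> carrier_vec c" using Kh u by simp
  have "?Kw = v + - ?Khu"
    unfolding v using K w Khu Kh by (intro eq_vecI) auto
  then have "vec_deg ?Kw \<le> max (vec_deg v) (vec_deg ?Khu)"
    using vec_deg_add_le[of v "- ?Khu"] v K w Khu by simp
  moreover have "vec_deg ?Khu \<le> vec_deg u"
    using vec_deg_mult_mat_vec_le[of "transpose_mat (constp Kh)" c s u] Kh u
    by (simp flip: constp_transpose)
  moreover have "vec_deg ?Kw = 1 + vec_deg w"
    by (rule minimal_basis_predictable_degree[OF K min rd w False])
  ultimately show ?thesis using deg_v deg_u by linarith
qed simp

section \<open>Strict properness of state-space realizations\<close>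

lemma degree_det_le:
  fixes P :: "'a::field poly mat"
  assumes P: "P \<in> carrier_mat k k" and deg: "mat_deg P \<le> e"
  shows "degree (det P) \<le> k * e"
proof -
  have "degree (signof p * (\<Prod>i = 0..<k. P $$ (i, p i))) \<le> k * e" if p: "p permutes {0..<k}" for p
  proof -
    have "degree (signof p * (\<Prod>i = 0..<k. P $$ (i, p i))) = degree (\<Prod>i = 0..<k. P $$ (i, p i))"
      by (rule degree_signof_mult)
    also have "\<dots> \<le> sum (degree \<circ> (\<lambda>i. P $$ (i, p i))) {0..<k}"
      by (rule degree_prod_sum_le) simp
    also have "\<dots> \<le> sum (\<lambda>i. e) {0..<k}"
    proof (rule sum_mono)
      fix i assume i: "i \<in> {0..<k}"
      then have "p i < k" using p by (meson atLeastLessThan_iff permutes_in_image)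
      then show "(degree \<circ> (\<lambda>i. P $$ (i, p i))) i \<le> e"
        using i P deg degree_le_mat_deg[of i P "p i"] by simp
    qed
    finally show ?thesis by simp
  qed
  then show ?thesis
    unfolding det_def'[OF P] by (intro degree_sum_le) (simp_all add: finite_permutations)
qed

lemma mat_deg_adj_mat_le:
  fixes P :: "'a::field poly mat"
  assumes P: "P \<in> carrier_mat k k" and deg: "mat_deg P \<le> e"
  shows "mat_deg (adj_mat P) \<le> (k - 1) * e"
  unfolding mat_deg_le_iff
proof (intro allI impI)
  fix i j assume "i < dim_row (adj_mat P)" "j < dim_col (adj_mat P)"
  then have ij: "i < k" "j < k" using adj_mat(1)[OF P] by auto
  have entries: "\<forall>a < k. \<forall>b < k. degree (P $$ (a, b)) \<le> e"
    using P deg unfolding mat_deg_le_iff by simp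
  have "mat_deg (mat_delete P j i) \<le> e"
    unfolding mat_deg_le_iff using P ij entries by (auto simp: mat_delete_def)
  then have "degree (det (mat_delete P j i)) \<le> (k - 1) * e"
    using mat_delete_carrier[OF P] by (intro degree_det_le) auto
  moreover have "adj_mat P $$ (i, j) = (-1) ^ (j + i) * det (mat_delete P j i)"
    using ij P unfolding adj_mat_def cofactor_def by simp
  moreover have "degree ((-1) ^ (j + i) * q) = degree (q :: 'a poly)" for q
    by (cases "even (j + i)") auto
  ultimately show "degree (adj_mat P $$ (i, j)) \<le> (k - 1) * e" by simp
qed

lemma lamI_minus_eq_char_poly_matrix:
  "A \<in> carrier_mat n n \<Longrightarrow> lamI_minus A = embp (char_poly_matrix A)"
  unfolding lamI_minus_def char_poly_matrix_def by (intro arg_cong[where f = embp] eq_matI) auto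

lemma resolvent_eq_adj_mat:
  fixes A :: "'a::field mat"
  assumes A: "A \<in> carrier_mat n n"
  shows "resolvent A = inverse (Fract (char_poly A) 1) \<cdot>\<^sub>m embp (adj_mat (char_poly_matrix A))"
proof -
  let ?L = "char_poly_matrix A" and ?c = "Fract (char_poly A) 1"
  let ?R = "inverse ?c \<cdot>\<^sub>m embp (adj_mat ?L)"
  have L: "?L \<in> carrier_mat n n" using A by simp
  have adj: "adj_mat ?L \<in> carrier_mat n n" by (rule adj_mat(1)[OF L])
  have "?c \<noteq> 0"
    using degree_monic_char_poly[OF A] by auto
  moreover have "inverse x \<cdot>\<^sub>m (x \<cdot>\<^sub>m 1\<^sub>m n) = 1\<^sub>m n" if "x \<noteq> 0" for x :: "'a rat_fun"
    using that by (intro eq_matI) auto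
  ultimately have inv_c: "inverse ?c \<cdot>\<^sub>m (?c \<cdot>\<^sub>m 1\<^sub>m n) = 1\<^sub>m n" by blast
  have "embp ?L * embp (adj_mat ?L) = embp (?L * adj_mat ?L)" by (rule embp_mult[OF L adj, symmetric])
  also have "\<dots> = ?c \<cdot>\<^sub>m 1\<^sub>m n" using adj_mat(2)[OF L] by (simp add: embp_smult char_poly_def)
  finally have "embp ?L * ?R = 1\<^sub>m n"
    using L adj inv_c by (simp add: mult_smult_distrib[of _ n n _ n])
  have "embp (adj_mat ?L) * embp ?L = embp (adj_mat ?L * ?L)" by (rule embp_mult[OF adj L, symmetric])
  also have "\<dots> = ?c \<cdot>\<^sub>m 1\<^sub>m n" using adj_mat(3)[OF L] by (simp add: embp_smult char_poly_def)
  finally have "?R * embp ?L = 1\<^sub>m n"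
    using L adj inv_c by (simp add: mult_smult_assoc_mat[of _ n n _ n])
  with \<open>embp ?L * ?R = 1\<^sub>m n\<close> have "mat_inverse (embp ?L) = Some ?R"
    using L adj by (intro mat_inverse_eq_Some) auto
  then show ?thesis
    unfolding resolvent_def lamI_minus_eq_char_poly_matrix[OF A] by simp
qed

lemma state_space_eq_adj_mat:
  fixes A :: "'a::field mat"
  assumes A: "A \<in> carrier_mat n n" and B: "B \<in> carrier_mat n m" and C: "C \<in> carrier_mat p n"
  shows "state_space A B C = inverse (Fract (char_poly A) 1)
    \<cdot>\<^sub>m embp (constp C * adj_mat (char_poly_matrix A) * constp B)"
proof -
  let ?adj = "adj_mat (char_poly_matrix A)"
  have adj: "?adj \<in> carrier_mat n n" using A by (simp add: adj_mat(1))
  have "embp (constp C * ?adj * constp B) = embp (constp C * ?adj) * embc B"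
    unfolding embc_def by (rule embp_mult) (use B C adj in auto)
  also have "embp (constp C * ?adj) = embc C * embp ?adj"
    unfolding embc_def by (rule embp_mult) (use C adj in auto)
  finally have "embp (constp C * ?adj * constp B) = embc C * embp ?adj * embc B" .
  moreover have "embc C * (inverse (Fract (char_poly A) 1) \<cdot>\<^sub>m embp ?adj) * embc B
      = inverse (Fract (char_poly A) 1) \<cdot>\<^sub>m (embc C * embp ?adj * embc B)"
    using B C adj by (simp add: mult_smult_distrib[of _ p n _ n] mult_smult_assoc_mat[of _ p n _ m])
  ultimately show ?thesis
    unfolding state_space_def resolvent_eq_adj_mat[OF A] by simp
qed

lemma embpv_eq_inverse_smult:
  fixes q y :: "'a::field poly vec"
  assumes c: "c \<noteq> 0" and q: "q \<in> carrier_vec n" and y: "y \<in> carrier_vec n"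
    and eq: "embpv q = inverse (Fract c 1) \<cdot>\<^sub>v embpv y" and i: "i < n"
  shows "c * q $ i = y $ i"
proof -
  have cancel: "a = inverse x * b \<Longrightarrow> x \<noteq> 0 \<Longrightarrow> x * a = b" for a b x :: "'a rat_fun"
    by simp
  have "embpv q $ i = (inverse (Fract c 1) \<cdot>\<^sub>v embpv y) $ i"
    using eq by simp
  then have "Fract (q $ i) 1 = inverse (Fract c 1) * Fract (y $ i) 1"
    using i q y by (simp add: embpv_index)
  then have "Fract c 1 * Fract (q $ i) 1 = Fract (y $ i) 1"
    by (rule cancel) (use c in simp)
  then show ?thesis by (simp add: eq_fract)
qed

lemma state_space_strictly_proper:
  fixes A :: "'a::field mat"
  assumes A: "A \<in> carrier_mat n n" and B: "B \<in> carrier_mat n m" and C: "C \<in> carrier_mat p n"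
    and h: "h \<in> carrier_vec m" and q: "q \<in> carrier_vec p"
    and eq: "embpv q = state_space A B C *\<^sub>v embpv h"
  shows "vec_deg q \<le> vec_deg h"
proof -
  let ?\<chi> = "char_poly A" and ?adj = "adj_mat (char_poly_matrix A)"
  define Y where "Y = constp C * ?adj * constp B"
  have adj: "?adj \<in> carrier_mat n n" using A by (simp add: adj_mat(1))
  have Y: "Y \<in> carrier_mat p m" unfolding Y_def using A B C adj by simp
  have "mat_deg (char_poly_matrix A) \<le> 1"
    unfolding mat_deg_le_iff char_poly_matrix_def using A by auto
  then have "mat_deg ?adj \<le> n - 1"
    using mat_deg_adj_mat_le[of "char_poly_matrix A" n 1] A by simp
  then have deg_Y: "mat_deg Y \<le> n - 1"
    unfolding Y_def using mat_deg_mult_le[of "constp C * ?adj" p n "constp B" m]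
      mat_deg_mult_le[of "constp C" p n ?adj n] B C adj by simp
  have \<chi>: "?\<chi> \<noteq> 0" "degree ?\<chi> = n"
    using degree_monic_char_poly[OF A] by auto
  have "embpv q = inverse (Fract ?\<chi> 1) \<cdot>\<^sub>v embpv (Y *\<^sub>v h)"
    using eq Y h unfolding state_space_eq_adj_mat[OF A B C, folded Y_def]
    by (simp add: embp_mult_vec[OF Y h] smult_mat_mult_mat_vec[of _ p m])
  then have \<chi>_q: "?\<chi> * q $ i = (Y *\<^sub>v h) $ i" if "i < p" for i
    using embpv_eq_inverse_smult[OF \<chi>(1) q _ _ that] Y h by simp
  show ?thesis
    unfolding vec_deg_le_iff
  proof (intro allI impI)
    fix i assume "i < dim_vec q"
    then have i: "i < p" using q by simp
    show "degree (q $ i) \<le> vec_deg h"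
    proof (cases "q $ i = 0")
      case False
      have "n + degree (q $ i) = degree (?\<chi> * q $ i)"
        using degree_mult_eq[OF \<chi>(1) False] \<chi>(2) by simp
      also have "\<dots> \<le> vec_deg (Y *\<^sub>v h)"
        using \<chi>_q[OF i] degree_le_vec_deg[of i "Y *\<^sub>v h"] i Y by simp
      also have "\<dots> \<le> mat_deg Y + vec_deg h" by (rule vec_deg_mult_mat_vec_le[OF Y h])
      finally show ?thesis using deg_Y by linarith
    qed simp
  qed
qed

section \<open>Null spaces of the block matrices\<close>

locale unimodular_completions =
  fixes K1 Kh1 Nh1 N1 K2 Kh2 Nh2 N2 M S :: "'b::comm_ring_1 mat" and m mh p ph :: nat
  assumes K1: "K1 \<in> carrier_mat mh (m + mh)" and Kh1: "Kh1 \<in> carrier_mat m (m + mh)"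
    and Nh1: "Nh1 \<in> carrier_mat mh (m + mh)" and N1: "N1 \<in> carrier_mat m (m + mh)"
    and K2: "K2 \<in> carrier_mat ph (p + ph)" and Kh2: "Kh2 \<in> carrier_mat p (p + ph)"
    and Nh2: "Nh2 \<in> carrier_mat ph (p + ph)" and N2: "N2 \<in> carrier_mat p (p + ph)"
    and M: "M \<in> carrier_mat (p + ph) (m + mh)" and S: "S \<in> carrier_mat p m"
    and U1: "(K1 @\<^sub>r Kh1) * transpose_mat (Nh1 @\<^sub>r N1) = 1\<^sub>m (mh + m)"
      "transpose_mat (Nh1 @\<^sub>r N1) * (K1 @\<^sub>r Kh1) = 1\<^sub>m (m + mh)"
    and U2: "(K2 @\<^sub>r Kh2) * transpose_mat (Nh2 @\<^sub>r N2) = 1\<^sub>m (ph + p)"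
      "transpose_mat (Nh2 @\<^sub>r N2) * (K2 @\<^sub>r Kh2) = 1\<^sub>m (p + ph)"
begin

abbreviation G :: "'b mat" where
  "G \<equiv> N2 * M * transpose_mat N1 + S"

abbreviation Ghat :: "'b mat" where
  "Ghat \<equiv> four_block_mat (M + transpose_mat Kh2 * S * Kh1) (transpose_mat K2) K1 (0\<^sub>m mh ph)"

abbreviation Z :: "'b mat" where
  "Z \<equiv> transpose_mat N1 @\<^sub>r (- (Nh2 * M * transpose_mat N1))"

lemma K1_N1: "K1 * transpose_mat N1 = 0\<^sub>m mh m"
  and Kh1_N1: "Kh1 * transpose_mat N1 = 1\<^sub>m m"
  and completion1: "transpose_mat Nh1 * K1 + transpose_mat N1 * Kh1 = 1\<^sub>m (m + mh)"
  using inverse_append_rows_blocks[OF K1 Kh1 Nh1 N1 U1] by simp_all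

lemma N2_K2: "N2 * transpose_mat K2 = 0\<^sub>m p ph"
  and Nh2_K2: "Nh2 * transpose_mat K2 = 1\<^sub>m ph"
  and N2_Kh2: "N2 * transpose_mat Kh2 = 1\<^sub>m p"
  and Nh2_Kh2: "Nh2 * transpose_mat Kh2 = 0\<^sub>m ph p"
  and completion2: "transpose_mat K2 * Nh2 + transpose_mat Kh2 * N2 = 1\<^sub>m (p + ph)"
proof -
  note blocks = inverse_append_rows_blocks[OF K2 Kh2 Nh2 N2 U2]
  show "N2 * transpose_mat K2 = 0\<^sub>m p ph" "Nh2 * transpose_mat K2 = 1\<^sub>m ph"
    "N2 * transpose_mat Kh2 = 1\<^sub>m p" "Nh2 * transpose_mat Kh2 = 0\<^sub>m ph p"
    using blocks(1-4) mult_transpose_swap[OF K2 N2] mult_transpose_swap[OF K2 Nh2]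
      mult_transpose_swap[OF Kh2 N2] mult_transpose_swap[OF Kh2 Nh2] by simp_all
  have "transpose_mat (transpose_mat Nh2 * K2 + transpose_mat N2 * Kh2)
      = transpose_mat (transpose_mat Nh2 * K2) + transpose_mat (transpose_mat N2 * Kh2)"
    using K2 Kh2 Nh2 N2 by (intro transpose_add) auto
  also have "\<dots> = transpose_mat K2 * Nh2 + transpose_mat Kh2 * N2"
    using K2 Kh2 Nh2 N2 transpose_mult[of "transpose_mat Nh2" "p + ph" ph K2 "p + ph"]
      transpose_mult[of "transpose_mat N2" "p + ph" p Kh2 "p + ph"] by simp
  finally have "transpose_mat (transpose_mat Nh2 * K2 + transpose_mat N2 * Kh2)
      = transpose_mat K2 * Nh2 + transpose_mat Kh2 * N2" .
  then show "transpose_mat K2 * Nh2 + transpose_mat Kh2 * N2 = 1\<^sub>m (p + ph)"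
    using blocks(5) by simp
qed

lemma Z_carrier: "Z \<in> carrier_mat (m + mh + ph) m"
  using N1 Nh2 M by simp

lemma Ghat_carrier: "Ghat \<in> carrier_mat (p + ph + mh) (m + mh + ph)"
  using M Kh2 S Kh1 K2 K1 by simp

lemma Z_mult_vec:
  "h \<in> carrier_vec m \<Longrightarrow>
    Z *\<^sub>v h = (transpose_mat N1 *\<^sub>v h) @\<^sub>v (- (Nh2 *\<^sub>v (M *\<^sub>v (transpose_mat N1 *\<^sub>v h))))"
  using N1 Nh2 M mult_mat_vec_assoc3[OF _ M, of Nh2 ph "transpose_mat N1" m h]
  by (simp add: mat_mult_append[of _ "m + mh" m _ ph])

lemma Ghat_mult_vec:
  assumes x: "x \<in> carrier_vec (m + mh)" and y: "y \<in> carrier_vec ph"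
  shows "Ghat *\<^sub>v (x @\<^sub>v y)
    = (M *\<^sub>v x + transpose_mat Kh2 *\<^sub>v (S *\<^sub>v (Kh1 *\<^sub>v x)) + transpose_mat K2 *\<^sub>v y) @\<^sub>v (K1 *\<^sub>v x)"
proof -
  have "(M + transpose_mat Kh2 * S * Kh1) *\<^sub>v x = M *\<^sub>v x + transpose_mat Kh2 *\<^sub>v (S *\<^sub>v (Kh1 *\<^sub>v x))"
    using M Kh2 S Kh1 x mult_mat_vec_assoc3[of "transpose_mat Kh2" "p + ph" p S m Kh1 "m + mh" x]
    by (simp add: add_mult_distrib_mat_vec[of _ "p + ph" "m + mh"])
  moreover have "K1 *\<^sub>v x + 0\<^sub>m mh ph *\<^sub>v y = K1 *\<^sub>v x"
    using K1 x y by (simp add: zero_mat_mult_vec)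
  ultimately show ?thesis
    using M Kh2 S Kh1 K2 K1 x y
    by (subst four_block_mat_mult_vec[of _ "p + ph" "m + mh" _ ph _ mh]) auto
qed

lemma Ghat_Z_mult_vec:
  assumes h: "h \<in> carrier_vec m" and Gh: "G *\<^sub>v h = 0\<^sub>v p"
  shows "Ghat *\<^sub>v (Z *\<^sub>v h) = 0\<^sub>v (p + ph + mh)"
proof -
  define x where "x = transpose_mat N1 *\<^sub>v h"
  define v where "v = M *\<^sub>v x"
  have x: "x \<in> carrier_vec (m + mh)" and v: "v \<in> carrier_vec (p + ph)"
    unfolding x_def v_def using N1 M h by auto
  have "K1 *\<^sub>v x = (K1 * transpose_mat N1) *\<^sub>v h" "Kh1 *\<^sub>v x = (Kh1 * transpose_mat N1) *\<^sub>v h"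
    unfolding x_def using K1 Kh1 N1 h by simp_all
  then have K1x: "K1 *\<^sub>v x = 0\<^sub>v mh" and Kh1x: "Kh1 *\<^sub>v x = h"
    using K1_N1 Kh1_N1 h by auto
  have "v = (transpose_mat K2 * Nh2 + transpose_mat Kh2 * N2) *\<^sub>v v"
    using completion2 v by simp
  also have "\<dots> = transpose_mat K2 *\<^sub>v (Nh2 *\<^sub>v v) + transpose_mat Kh2 *\<^sub>v (N2 *\<^sub>v v)"
    using K2 Nh2 Kh2 N2 v by (simp add: add_mult_distrib_mat_vec[of _ "p + ph" "p + ph"])
  finally have v_split: "v = transpose_mat K2 *\<^sub>v (Nh2 *\<^sub>v v) + transpose_mat Kh2 *\<^sub>v (N2 *\<^sub>v v)" .
  have "G *\<^sub>v h = N2 *\<^sub>v v + S *\<^sub>v h"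
    unfolding v_def x_def using N2 M N1 S h mult_mat_vec_assoc3[OF N2 M _ h, of "transpose_mat N1"]
    by (simp add: add_mult_distrib_mat_vec[of _ p m])
  then have "transpose_mat Kh2 *\<^sub>v (N2 *\<^sub>v v + S *\<^sub>v h) = 0\<^sub>v (p + ph)"
    using Gh Kh2 mult_mat_vec_zero[of "transpose_mat Kh2" "p + ph" p] by simp
  then have Kh2_G: "transpose_mat Kh2 *\<^sub>v (N2 *\<^sub>v v) + transpose_mat Kh2 *\<^sub>v (S *\<^sub>v h) = 0\<^sub>v (p + ph)"
    using Kh2 N2 S h v by (simp add: mult_add_distrib_mat_vec[of _ "p + ph" p])
  have top: "v + transpose_mat Kh2 *\<^sub>v (S *\<^sub>v h) + transpose_mat K2 *\<^sub>v (- (Nh2 *\<^sub>v v)) = 0\<^sub>v (p + ph)"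
  proof (rule eq_vecI)
    fix i assume "i < dim_vec (0\<^sub>v (p + ph) :: 'b vec)"
    then have i: "i < p + ph" by simp
    have "v $ i = (transpose_mat K2 *\<^sub>v (Nh2 *\<^sub>v v)) $ i + (transpose_mat Kh2 *\<^sub>v (N2 *\<^sub>v v)) $ i"
      using arg_cong[OF v_split, of "\<lambda>u. u $ i"] i K2 Kh2 by simp
    moreover have "(transpose_mat Kh2 *\<^sub>v (N2 *\<^sub>v v)) $ i + (transpose_mat Kh2 *\<^sub>v (S *\<^sub>v h)) $ i = 0"
      using arg_cong[OF Kh2_G, of "\<lambda>u. u $ i"] i Kh2 by simp
    ultimately show "(v + transpose_mat Kh2 *\<^sub>v (S *\<^sub>v h) + transpose_mat K2 *\<^sub>v (- (Nh2 *\<^sub>v v))) $ i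
        = 0\<^sub>v (p + ph) $ i"
      using i v K2 Kh2 Nh2 by (simp add: mult_mat_vec_uminus[of _ "p + ph" ph] algebra_simps)
  qed (use v K2 in simp)
  have "Z *\<^sub>v h = x @\<^sub>v (- (Nh2 *\<^sub>v v))"
    unfolding Z_mult_vec[OF h] x_def v_def ..
  then show ?thesis
    using Ghat_mult_vec[OF x, of "- (Nh2 *\<^sub>v v)"] Nh2 v top K1x Kh1x
    by (simp add: v_def zero_vec_append)
qed

lemma kernel_K1_eq:
  assumes x: "x \<in> carrier_vec (m + mh)" and K1x: "K1 *\<^sub>v x = 0\<^sub>v mh"
  shows "x = transpose_mat N1 *\<^sub>v (Kh1 *\<^sub>v x)"
proof -
  have "x = (transpose_mat Nh1 * K1 + transpose_mat N1 * Kh1) *\<^sub>v x"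
    using completion1 x by simp
  also have "\<dots> = transpose_mat Nh1 *\<^sub>v (K1 *\<^sub>v x) + transpose_mat N1 *\<^sub>v (Kh1 *\<^sub>v x)"
    using Nh1 K1 N1 Kh1 x by (simp add: add_mult_distrib_mat_vec[of _ "m + mh" "m + mh"])
  finally show ?thesis
    using K1x Nh1 N1 Kh1 x mult_mat_vec_zero[of "transpose_mat Nh1" "m + mh" mh] by simp
qed

lemma kernel_Ghat_imp_Z_image:
  assumes z: "z \<in> carrier_vec (m + mh + ph)" and Gz: "Ghat *\<^sub>v z = 0\<^sub>v (p + ph + mh)"
  shows "\<exists>h \<in> carrier_vec m. G *\<^sub>v h = 0\<^sub>v p \<and> z = Z *\<^sub>v h"
proof -
  define x where "x = vec_first z (m + mh)"
  define y where "y = vec_last z ph"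
  define h where "h = Kh1 *\<^sub>v x"
  have x: "x \<in> carrier_vec (m + mh)" and y: "y \<in> carrier_vec ph" and h: "h \<in> carrier_vec m"
    unfolding x_def y_def h_def using Kh1 by auto
  define r where "r = M *\<^sub>v x + transpose_mat Kh2 *\<^sub>v (S *\<^sub>v h) + transpose_mat K2 *\<^sub>v y"
  have r: "r \<in> carrier_vec (p + ph)" unfolding r_def using M Kh2 S K2 x y h by simp
  have "r @\<^sub>v (K1 *\<^sub>v x) = 0\<^sub>v (p + ph) @\<^sub>v 0\<^sub>v mh"
    using Gz Ghat_mult_vec[OF x y] z
    unfolding r_def h_def x_def y_def zero_vec_append[symmetric] by simp
  then have r0: "r = 0\<^sub>v (p + ph)" and K1x: "K1 *\<^sub>v x = 0\<^sub>v mh"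
    using append_vec_eq[OF r, of "0\<^sub>v (p + ph)"] by auto
  have xh: "x = transpose_mat N1 *\<^sub>v h"
    unfolding h_def by (rule kernel_K1_eq[OF x K1x])
  have "N2 *\<^sub>v (transpose_mat Kh2 *\<^sub>v (S *\<^sub>v h)) = S *\<^sub>v h"
    "Nh2 *\<^sub>v (transpose_mat Kh2 *\<^sub>v (S *\<^sub>v h)) = 0\<^sub>v ph"
    "N2 *\<^sub>v (transpose_mat K2 *\<^sub>v y) = 0\<^sub>v p" "Nh2 *\<^sub>v (transpose_mat K2 *\<^sub>v y) = y"
    using N2_Kh2 Nh2_Kh2 N2_K2 Nh2_K2 N2 Nh2 Kh2 K2 S h y
    by (simp_all add: zero_mat_mult_vec flip: assoc_mult_mat_vec[of _ _ "p + ph"])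
  then have N2_r: "N2 *\<^sub>v r = N2 *\<^sub>v (M *\<^sub>v x) + S *\<^sub>v h"
    and Nh2_r: "Nh2 *\<^sub>v r = Nh2 *\<^sub>v (M *\<^sub>v x) + y"
    unfolding r_def using M Kh2 S K2 N2 Nh2 x y h
    by (simp_all add: mult_add_distrib_mat_vec[of _ _ "p + ph"])
  have "G *\<^sub>v h = N2 *\<^sub>v r"
    unfolding N2_r xh using N2 M N1 S h mult_mat_vec_assoc3[OF N2 M _ h, of "transpose_mat N1"]
    by (simp add: add_mult_distrib_mat_vec[of _ p m])
  then have Gh: "G *\<^sub>v h = 0\<^sub>v p" using r0 mult_mat_vec_zero[OF N2] by simp
  have "y = - (Nh2 *\<^sub>v (M *\<^sub>v x))"
  proof (rule eq_vecI)
    fix i assume "i < dim_vec (- (Nh2 *\<^sub>v (M *\<^sub>v x)))"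
    then have i: "i < ph" using Nh2 by simp
    have "(Nh2 *\<^sub>v (M *\<^sub>v x)) $ i + y $ i = 0"
      using arg_cong[OF Nh2_r, of "\<lambda>u. u $ i"] r0 Nh2 y i by simp
    then show "y $ i = (- (Nh2 *\<^sub>v (M *\<^sub>v x))) $ i"
      using i Nh2 by (simp add: eq_neg_iff_add_eq_0 add.commute)
  qed (use y Nh2 in simp)
  moreover have "z = x @\<^sub>v y"
    unfolding x_def y_def using z by simp
  ultimately have "z = Z *\<^sub>v h"
    unfolding Z_mult_vec[OF h] xh[symmetric] by simp
  with h Gh show ?thesis by blast
qed

end

section \<open>The block minimal bases linearization\<close>

locale strong_block_minimal_bases_data =
  fixes G :: "'a::field rat_fun mat" and D :: "'a poly mat"
    and A B C :: "'a mat" and n p m ph mh :: nat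
    and K1 K2 N1 N2 M Nh1 Nh2 :: "'a poly mat" and Kh1 Kh2 :: "'a mat"
  assumes G: "G \<in> carrier_mat p m"
    and D: "D \<in> carrier_mat p m"
    and realization: "G = embp D + state_space A B C"
    and A: "A \<in> carrier_mat n n" and B: "B \<in> carrier_mat n m" and C: "C \<in> carrier_mat p n"
    and K1: "K1 \<in> carrier_mat mh (m + mh)" and K2: "K2 \<in> carrier_mat ph (p + ph)"
    and N1: "N1 \<in> carrier_mat m (m + mh)" and N2: "N2 \<in> carrier_mat p (p + ph)"
    and K2min: "minimal_basis K2" and K2deg: "\<forall>i < ph. row_deg K2 i = 1"
    and N1min: "minimal_basis N1" and N1deg: "\<exists>d. \<forall>i < m. row_deg N1 i = d"
    and M: "M \<in> carrier_mat (p + ph) (m + mh)" and pencil: "mat_deg M \<le> 1"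
    and DM: "D = N2 * M * transpose_mat N1"
    and Kh1: "Kh1 \<in> carrier_mat m (m + mh)" and Kh2: "Kh2 \<in> carrier_mat p (p + ph)"
    and Nh1: "Nh1 \<in> carrier_mat mh (m + mh)" and Nh2: "Nh2 \<in> carrier_mat ph (p + ph)"
    and U1: "unimodular_with_inverse (K1 @\<^sub>r constp Kh1) (transpose_mat (Nh1 @\<^sub>r N1))"
    and U2: "unimodular_with_inverse (K2 @\<^sub>r constp Kh2) (transpose_mat (Nh2 @\<^sub>r N2))"
begin

definition Ghat :: "'a rat_fun mat" where
  "Ghat = four_block_mat (embp M + embc (transpose_mat Kh2) * state_space A B C * embc Kh1)
     (embp (transpose_mat K2)) (embp K1) (0\<^sub>m mh ph)"

definition Z :: "'a poly mat" where
  "Z = transpose_mat N1 @\<^sub>r (- (Nh2 * M * transpose_mat N1))"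

lemma state_space_carrier: "state_space A B C \<in> carrier_mat p m"
proof -
  have "resolvent A \<in> carrier_mat n n"
    unfolding resolvent_eq_adj_mat[OF A] using adj_mat(1)[OF char_poly_matrix_closed[OF A]] by simp
  then have "embc C * resolvent A \<in> carrier_mat p n" using C by simp
  then show ?thesis unfolding state_space_def using B by simp
qed

lemma Z_carrier: "Z \<in> carrier_mat (m + mh + ph) m"
  unfolding Z_def using N1 Nh2 M by simp

sublocale rat: unimodular_completions "embp K1" "embc Kh1" "embp Nh1" "embp N1" "embp K2" "embc Kh2"
  "embp Nh2" "embp N2" "embp M" "state_space A B C" m mh p ph
proof unfold_locales
  show "(embp K1 @\<^sub>r embc Kh1) * transpose_mat (embp Nh1 @\<^sub>r embp N1) = 1\<^sub>m (mh + m)"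
    "transpose_mat (embp Nh1 @\<^sub>r embp N1) * (embp K1 @\<^sub>r embc Kh1) = 1\<^sub>m (m + mh)"
    using unimodular_with_inverse_append_rows(3,4)[OF K1 _ Nh1 N1 U1] Kh1 by (simp_all add: embc_def)
  show "(embp K2 @\<^sub>r embc Kh2) * transpose_mat (embp Nh2 @\<^sub>r embp N2) = 1\<^sub>m (ph + p)"
    "transpose_mat (embp Nh2 @\<^sub>r embp N2) * (embp K2 @\<^sub>r embc Kh2) = 1\<^sub>m (p + ph)"
    using unimodular_with_inverse_append_rows(3,4)[OF K2 _ Nh2 N2 U2] Kh2 by (simp_all add: embc_def)
qed (use K1 Kh1 Nh1 N1 K2 Kh2 Nh2 N2 M state_space_carrier in simp_all)

sublocale poly: unimodular_completions K1 "constp Kh1" Nh1 N1 K2 "constp Kh2" Nh2 N2 M "0\<^sub>m p m" m mh p ph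
  using unimodular_with_inverse_append_rows(1,2)[OF K1 _ Nh1 N1 U1]
    unimodular_with_inverse_append_rows(1,2)[OF K2 _ Nh2 N2 U2]
  by unfold_locales (use K1 Kh1 Nh1 N1 K2 Kh2 Nh2 N2 M in simp_all)

lemma G_eq: "G = rat.G"
  unfolding realization DM using embp_triple_mult[OF N2 M, of "transpose_mat N1" m] N1 by simp

lemma Ghat_eq: "Ghat = rat.Ghat"
  unfolding Ghat_def by simp

lemma embp_Z: "embp Z = rat.Z"
proof -
  have "- (Nh2 * M * transpose_mat N1) \<in> carrier_mat ph m" using Nh2 M N1 by simp
  then have "embp Z = transpose_mat (embp N1) @\<^sub>r embp (- (Nh2 * M * transpose_mat N1))"
    unfolding Z_def using embp_append_rows[of "transpose_mat N1" "m + mh" m] N1 by simp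
  also have "embp (- (Nh2 * M * transpose_mat N1)) = - (embp Nh2 * embp M * transpose_mat (embp N1))"
    using embp_triple_mult[OF Nh2 M, of "transpose_mat N1" m] N1 by (simp add: embp_uminus)
  finally show ?thesis .
qed

lemma Ghat_carrier: "Ghat \<in> carrier_mat (p + ph + mh) (m + mh + ph)"
  unfolding Ghat_eq by (rule rat.Ghat_carrier)

lemma rnull_G: "rnull G = {h \<in> carrier_vec m. rat.G *\<^sub>v h = 0\<^sub>v p}"
  unfolding rnull_def G_eq[symmetric] using G by simp

lemma rnull_Ghat: "rnull Ghat = {z \<in> carrier_vec (m + mh + ph). rat.Ghat *\<^sub>v z = 0\<^sub>v (p + ph + mh)}"
  unfolding rnull_def Ghat_eq using rat.Ghat_carrier Kh1 Kh2 by (simp add: carrier_matD)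

lemma Z_maps_rnull: "h \<in> rnull G \<Longrightarrow> embp Z *\<^sub>v h \<in> rnull Ghat"
  using rat.Ghat_Z_mult_vec rat.Z_carrier
  unfolding rnull_G rnull_Ghat embp_Z by auto

lemma rnull_Ghat_in_Z_image: "z \<in> rnull Ghat \<Longrightarrow> \<exists>h \<in> rnull G. z = embp Z *\<^sub>v h"
  using rat.kernel_Ghat_imp_Z_image
  unfolding rnull_G rnull_Ghat embp_Z by blast

definition W :: "'a poly mat" where
  "W = four_block_mat (constp Kh1) (0\<^sub>m m ph) (0\<^sub>m 0 (m + mh)) (0\<^sub>m 0 ph)"

lemma W_carrier: "W \<in> carrier_mat m (m + mh + ph)"
  unfolding W_def using Kh1 four_block_carrier_mat[of "constp Kh1" m "m + mh" "0\<^sub>m 0 ph" 0 ph] by simp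

lemma W_Z: "W * Z = 1\<^sub>m m"
  unfolding W_def Z_def using Kh1 N1 Nh2 M poly.Kh1_N1 by (intro append_rows_left_inverse) auto

lemma vec_deg_N1_transpose_mult:
  assumes h: "h \<in> carrier_vec m" "h \<noteq> 0\<^sub>v m"
  shows "vec_deg (transpose_mat N1 *\<^sub>v h) = mat_deg N1 + vec_deg h"
proof -
  obtain d where rd: "\<forall>i < m. row_deg N1 i = d" using N1deg by blast
  have "m > 0" using h by (cases m) auto
  then have "mat_deg N1 = d" by (rule mat_deg_eq_row_deg[OF N1 _ rd])
  then show ?thesis using minimal_basis_predictable_degree[OF N1 N1min rd h] by simp
qed

lemma vec_deg_D_mult_le:
  assumes h: "h \<in> carrier_vec m" and null: "embpv h \<in> rnull G"
  shows "vec_deg (D *\<^sub>v h) \<le> vec_deg h"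
proof -
  define q where "q = D *\<^sub>v h"
  let ?S = "state_space A B C"
  have q: "q \<in> carrier_vec p" unfolding q_def using D h by simp
  have "embp D *\<^sub>v embpv h + ?S *\<^sub>v embpv h = 0\<^sub>v p"
    using null D h state_space_carrier
    unfolding rnull_def realization by (simp add: add_mult_distrib_mat_vec[of _ p m])
  then have sum0: "embpv q + ?S *\<^sub>v embpv h = 0\<^sub>v p"
    unfolding q_def embp_mult_vec[OF D h] .
  have "embpv (- q) = ?S *\<^sub>v embpv h"
  proof (rule eq_vecI)
    fix i assume "i < dim_vec (?S *\<^sub>v embpv h)"
    then have i: "i < p" using state_space_carrier by simp
    have "(embpv q + ?S *\<^sub>v embpv h) $ i = embpv q $ i + (?S *\<^sub>v embpv h) $ i"
      using i q state_space_carrier by (intro index_add_vec(1)) simp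
    then have "embpv q $ i + (?S *\<^sub>v embpv h) $ i = 0"
      using sum0 i by simp
    then have "- embpv q $ i = (?S *\<^sub>v embpv h) $ i"
      by (rule minus_unique)
    moreover have "embpv (- q) $ i = - embpv q $ i"
      using i q by (simp add: embpv_index)
    ultimately show "embpv (- q) $ i = (?S *\<^sub>v embpv h) $ i" by simp
  qed (use q state_space_carrier in simp)
  moreover have "- q \<in> carrier_vec p" using q by simp
  ultimately have "vec_deg (- q) \<le> vec_deg h"
    by (intro state_space_strictly_proper[OF A B C h])
  then show ?thesis unfolding q_def by simp
qed

lemma vec_deg_le_N1_transpose_mult:
  assumes h: "h \<in> carrier_vec m"
  shows "vec_deg h \<le> vec_deg (transpose_mat N1 *\<^sub>v h)"
proof -
  let ?x = "transpose_mat N1 *\<^sub>v h"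
  have x: "?x \<in> carrier_vec (m + mh)" using N1 h by simp
  have "constp Kh1 *\<^sub>v ?x = (constp Kh1 * transpose_mat N1) *\<^sub>v h"
    using Kh1 N1 h by simp
  also have "\<dots> = h" unfolding poly.Kh1_N1 using h by simp
  finally show ?thesis
    using vec_deg_mult_mat_vec_le[of "constp Kh1" m "m + mh" ?x] Kh1 x by simp
qed

lemma vec_deg_Z_mult:
  assumes h: "h \<in> carrier_vec m" and null: "embpv h \<in> rnull G"
  shows "vec_deg (Z *\<^sub>v h) = vec_deg (transpose_mat N1 *\<^sub>v h)"
proof -
  define x where "x = transpose_mat N1 *\<^sub>v h"
  define v where "v = M *\<^sub>v x"
  define q where "q = D *\<^sub>v h"
  have x: "x \<in> carrier_vec (m + mh)" and v: "v \<in> carrier_vec (p + ph)" and q: "q \<in> carrier_vec p"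
    unfolding x_def v_def q_def using N1 M D h by auto
  have Nh2v: "Nh2 *\<^sub>v v \<in> carrier_vec ph" using Nh2 v by simp
  have N2v: "N2 *\<^sub>v v = q"
    unfolding v_def x_def q_def DM using mult_mat_vec_assoc3[OF N2 M _ h, of "transpose_mat N1"] N1 by simp
  have "v = (transpose_mat K2 * Nh2 + transpose_mat (constp Kh2) * N2) *\<^sub>v v"
    using poly.completion2 v by simp
  also have "\<dots> = transpose_mat K2 *\<^sub>v (Nh2 *\<^sub>v v) + transpose_mat (constp Kh2) *\<^sub>v (N2 *\<^sub>v v)"
    using K2 Nh2 Kh2 N2 v by (simp add: add_mult_distrib_mat_vec[of _ "p + ph" "p + ph"])
  finally have "v = transpose_mat K2 *\<^sub>v (Nh2 *\<^sub>v v) + transpose_mat (constp Kh2) *\<^sub>v q"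
    unfolding N2v .
  moreover have "vec_deg v \<le> vec_deg x + 1"
    using vec_deg_mult_mat_vec_le[OF M x] pencil unfolding v_def by simp
  moreover have "vec_deg q \<le> vec_deg x"
    using vec_deg_D_mult_le[OF h null] vec_deg_le_N1_transpose_mult[OF h] unfolding q_def x_def by simp
  ultimately have "vec_deg (Nh2 *\<^sub>v v) \<le> vec_deg x"
    using vec_deg_le_coordinates_degree_one_basis[OF K2 K2min K2deg Kh2 Nh2v q] by simp
  moreover have "Z *\<^sub>v h = x @\<^sub>v (- (Nh2 *\<^sub>v v))"
    unfolding Z_def x_def v_def using poly.Z_mult_vec[OF h] .
  ultimately show ?thesis
    unfolding x_def by (simp add: vec_deg_append)
qed

lemma right_minimal_basis_Z_mult:
  assumes H: "right_minimal_basis H G"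
  shows "right_minimal_basis (Z * H) Ghat"
proof -
  interpret poly_null_space_iso Z W m "m + mh + ph" "mat_deg N1" "rnull G" "rnull Ghat"
  proof
    show "rnull G \<subseteq> carrier_vec m" unfolding rnull_def using G by auto
    show "vec_deg (Z *\<^sub>v h) = mat_deg N1 + vec_deg h"
      if "h \<in> carrier_vec m" "h \<noteq> 0\<^sub>v m" "embpv h \<in> rnull G" for h
      using vec_deg_Z_mult vec_deg_N1_transpose_mult that by simp
  qed (use Z_carrier W_carrier W_Z Z_maps_rnull rnull_Ghat_in_Z_image in auto)
  have "minimal_col_basis (m + mh + ph) (Z * H) (rnull Ghat)"
    using H G unfolding right_minimal_basis_def by (intro minimal_col_basis_image) simp
  then show ?thesis
    unfolding right_minimal_basis_def using Ghat_carrier by simp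
qed

end

theorem lemma6p1:
  fixes G :: "'a::field rat_fun mat" and D :: "'a poly mat"
    and A B C :: "'a mat" and n p m ph mh :: nat
    and K1 K2 N1 N2 M Nh1 Nh2 :: "'a poly mat" and Kh1 Kh2 :: "'a mat"
  assumes G: "G \<in> carrier_mat p m"
    and D: "D \<in> carrier_mat p m"
    and realization: "G = embp D + state_space A B C"
    and minreal: "minimal_realization n p m A B C"
    and degD: "mat_deg D > 1"
    and K1: "K1 \<in> carrier_mat mh (m + mh)" and K2: "K2 \<in> carrier_mat ph (p + ph)"
    and N1: "N1 \<in> carrier_mat m (m + mh)" and N2: "N2 \<in> carrier_mat p (p + ph)"
    and K1min: "minimal_basis K1" and K2min: "minimal_basis K2"
    and K1deg: "\<forall>i < mh. row_deg K1 i = 1" and K2deg: "\<forall>i < ph. row_deg K2 i = 1"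
    and dual1: "dual_minimal_bases K1 N1" and dual2: "dual_minimal_bases K2 N2"
    and N1deg: "\<exists>d. \<forall>i < m. row_deg N1 i = d" and N2deg: "\<exists>d. \<forall>i < p. row_deg N2 i = d"
    and M: "M \<in> carrier_mat (p + ph) (m + mh)" and pencil: "mat_deg M \<le> 1"
    and DM: "D = N2 * M * transpose_mat N1"
    and degDM: "mat_deg D = mat_deg N1 + mat_deg N2 + 1"
    and Kh1: "Kh1 \<in> carrier_mat m (m + mh)" and Kh2: "Kh2 \<in> carrier_mat p (p + ph)"
    and Nh1: "Nh1 \<in> carrier_mat mh (m + mh)" and Nh2: "Nh2 \<in> carrier_mat ph (p + ph)"
    and U1: "unimodular_with_inverse (K1 @\<^sub>r constp Kh1) (transpose_mat (Nh1 @\<^sub>r N1))"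
    and U2: "unimodular_with_inverse (K2 @\<^sub>r constp Kh2) (transpose_mat (Nh2 @\<^sub>r N2))"
  defines "Ghat \<equiv> four_block_mat
              (embp M + embc (transpose_mat Kh2) * state_space A B C * embc Kh1)
              (embp (transpose_mat K2))
              (embp K1)
              (0\<^sub>m mh ph)"
    and "Z \<equiv> transpose_mat N1 @\<^sub>r (- (Nh2 * M * transpose_mat N1))"
  shows "(\<forall>h \<in> rnull G. embp Z *\<^sub>v h \<in> rnull Ghat) \<and>
         (\<forall>hp \<in> carrier_vec m. hp \<noteq> 0\<^sub>v m \<and> embpv hp \<in> rnull G \<longrightarrow>
             (\<exists>zp. embp Z *\<^sub>v embpv hp = embpv zp \<and>
                   vec_deg zp = vec_deg (transpose_mat N1 *\<^sub>v hp) \<and>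
                   vec_deg (transpose_mat N1 *\<^sub>v hp) = mat_deg N1 + vec_deg hp)) \<and>
         (\<forall>H. right_minimal_basis H G \<longrightarrow> right_minimal_basis (Z * H) Ghat)"
proof -
  interpret L: strong_block_minimal_bases_data G D A B C n p m ph mh K1 K2 N1 N2 M Nh1 Nh2 Kh1 Kh2
    using G D realization minreal K1 K2 N1 N2 K2min K2deg dual1 N1deg M pencil DM Kh1 Kh2 Nh1 Nh2 U1 U2
    unfolding minimal_realization_def dual_minimal_bases_def by unfold_locales auto
  have Ghat: "Ghat = L.Ghat" and Z: "Z = L.Z"
    unfolding Ghat_def Z_def L.Ghat_def L.Z_def by simp_all
  show ?thesis
    unfolding Ghat Z
  proof (intro conjI ballI allI impI)
    show "\<exists>zp. embp L.Z *\<^sub>v embpv hp = embpv zp \<and> vec_deg zp = vec_deg (transpose_mat N1 *\<^sub>v hp)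
        \<and> vec_deg (transpose_mat N1 *\<^sub>v hp) = mat_deg N1 + vec_deg hp"
      if hp: "hp \<in> carrier_vec m" and null: "hp \<noteq> 0\<^sub>v m \<and> embpv hp \<in> rnull G" for hp
      using embp_mult_vec[OF L.Z_carrier hp] L.vec_deg_Z_mult[OF hp] L.vec_deg_N1_transpose_mult[OF hp] null
      by (intro exI[of _ "L.Z *\<^sub>v hp"]) simp
  qed (simp_all add: L.Z_maps_rnull L.right_minimal_basis_Z_mult)
qed

end
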